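(* Let $(X,\omega_X,\mu_X)$ and $(Y,\omega_Y,\mu_Y)$ be measure networks and let $\mathscr{C}(\mu_X,\mu_Y)$ carry the narrow topology (as a subspace of $\operatorname{Prob}(X\times Y)$). If $1\le p<\infty$, then the distortion functional $\operatorname{dis}_p:\mathscr{C}(\mu_X,\mu_Y)\to\mathbb{R}_+$ is continuous. For $p=\infty$, $\operatorname{dis}_\infty$ is lower semicontinuous on $\mathscr{C}(\mu_X,\mu_Y)$.
   Context: A measure network is a triple $(X,\omega_X,\mu_X)$ where $X$ is a Polish space, $\mu_X$ is a fully supported Borel probability measure on $X$, and $\omega_X:X\times X\to\mathbb{R}$ is a bounded Borel measurable function. For measure networks $(X,\omega_X,\mu_X),(Y,\omega_Y,\mu_Y)$, $\mathscr{C}(\mu_X,\mu_Y)$ is the set of couplings, i.e. Borel probability measures $\mu$ on $X\times Y$ with $\mu(A\times Y)=\mu_X(A)$ and $\mu(X\times B)=\mu_Y(B)$ for all Borel $A\subseteq X$, $B\subseteq Y$. For $\mu\in\mathscr{C}(\mu_X,\mu_Y)$ and $p\in[1,\infty)$, $\operatorname{dis}_p(\mu):=\left(\int_{X\times Y}\int_{X\times Y}|\omega_X(x,x')-\omega_Y(y,y')|^p\,d\mu(x,y)\,d\mu(x',y')\right)^{1/p}$, and $\operatorname{dis}_\infty(\mu)$ is the $\mu\otimes\mu$-essential supremum of $|\omega_X(x,x')-\omega_Y(y,y')|$ over $((x,y),(x',y'))\in(X\times Y)^2$. The narrow topology on probability measures is the topology in which $\nu_n\to\nu$ iff $\int f\,d\nu_n\to\int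 f\,d\nu$ for all bounded continuous $f$. *)

theory Defs
  imports "HOL-Analysis.Analysis" "HOL-Probability.Probability"
begin

definition measure_network :: "('a::polish_space \<times> 'a \<Rightarrow> real) \<Rightarrow> 'a measure \<Rightarrow> bool" where
  "measure_network \<omega> \<mu> \<longleftrightarrow>
     prob_space \<mu> \<and> sets \<mu> = sets borel \<and>
     (\<forall>U. open U \<and> U \<noteq> {} \<longrightarrow> emeasure \<mu> U > 0) \<and>
     (\<exists>B. \<forall>z. \<bar>\<omega> z\<bar> \<le> B) \<and>
     \<omega> \<in> borel_measurable borel"

definition couplings :: "'a::polish_space measure \<Rightarrow> 'b::polish_space measure \<Rightarrow> ('a \<times> 'b) measure set" where
  "couplings \<mu>X \<mu>Y = {\<mu>. prob_space \<mu> \<and> sets \<mu> = sets borel \<and>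
     (\<forall>A \<in> sets borel. emeasure \<mu> (A \<times> UNIV) = emeasure \<mu>X A) \<and>
     (\<forall>B \<in> sets borel. emeasure \<mu> (UNIV \<times> B) = emeasure \<mu>Y B)}"

definition narrow_topology :: "('c::topological_space) measure topology" where
  "narrow_topology = topology_generated_by
     {{\<nu>. (\<integral>z. f z \<partial>\<nu>) \<in> U} | f U. continuous_on UNIV f \<and> bounded (range f) \<and> open (U :: real set)}"

definition dis_p :: "real \<Rightarrow> ('a \<times> 'a \<Rightarrow> real) \<Rightarrow> ('b \<times> 'b \<Rightarrow> real) \<Rightarrow> ('a \<times> 'b) measure \<Rightarrow> real" where
  "dis_p p \<omega>X \<omega>Y \<mu> =
     (\<integral>u. \<bar>\<omega>X (fst (fst u), fst (snd u)) - \<omega>Y (snd (fst u), snd (snd u))\<bar> powr p \<partial>(\<mu> \<Otimes>\<^sub>M \<mu>)) powr (1 / p)"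

definition dis_inf :: "('a \<times> 'a \<Rightarrow> real) \<Rightarrow> ('b \<times> 'b \<Rightarrow> real) \<Rightarrow> ('a \<times> 'b) measure \<Rightarrow> ereal" where
  "dis_inf \<omega>X \<omega>Y \<mu> =
     esssup (\<mu> \<Otimes>\<^sub>M \<mu>) (\<lambda>u. ereal \<bar>\<omega>X (fst (fst u), fst (snd u)) - \<omega>Y (snd (fst u), snd (snd u))\<bar>)"

definition lower_semicontinuous_map :: "'a topology \<Rightarrow> ('a \<Rightarrow> ereal) \<Rightarrow> bool" where
  "lower_semicontinuous_map T f \<longleftrightarrow> (\<forall>t. openin T {x \<in> topspace T. t < f x})"

end

theory Submission
  imports Defs
begin

text \<open>
  Borel probability measures on Polish spaces are regular, so bounded continuous functions are
  dense in \<open>L\<^sup>1(\<mu>\<^sub>X \<otimes> \<mu>\<^sub>X)\<close>. Since a coupling \<open>\<nu>\<close> has marginals \<open>\<mu>\<^sub>X\<close> and \<open>\<mu>\<^sub>Y\<close>, replacing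
  \<open>\<omega>\<^sub>X, \<omega>\<^sub>Y\<close> by such approximations changes \<open>\<integral>|\<omega>\<^sub>X - \<omega>\<^sub>Y|\<^sup>p d(\<nu> \<otimes> \<nu>)\<close> by an amount that is
  small uniformly in \<open>\<nu>\<close> (\<open>t \<mapsto> t\<^sup>p\<close> is Lipschitz on bounded intervals). So this integral is a
  uniform limit of maps \<open>\<nu> \<mapsto> \<integral>G d(\<nu> \<otimes> \<nu>)\<close> with \<open>G\<close> bounded continuous, and these are narrowly
  continuous on the couplings because the couplings form a uniformly tight family: by Fubini the
  difference of two such integrals reduces to slice integrals, which on a compact set are
  controlled by finitely many of them.

  On a probability space the supremum of the \<open>L\<^sup>p\<close> norms of a bounded nonnegative function is its
  essential supremum, so \<open>dis\<^sub>\<infinity>\<close> is the supremum of the continuous maps \<open>dis\<^sub>p\<close> and hence lower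
  semicontinuous.
\<close>

section \<open>Regularity of Borel measures and density of continuous functions\<close>

lemma space_eq_UNIV_if_sets_borel: "sets M = sets borel \<Longrightarrow> space M = UNIV"
  by (metis sets_eq_imp_space_eq space_borel)

lemma borel_measurable_if_continuous:
  "sets M = sets borel \<Longrightarrow> continuous_on UNIV g \<Longrightarrow> g \<in> borel_measurable M"
  by (subst measurable_cong_sets[OF _ refl]) (auto intro: borel_measurable_continuous_onI)

lemma integrable_if_bounded:
  fixes f :: "'a \<Rightarrow> real"
  assumes "finite_measure M" "f \<in> borel_measurable M" "\<And>x. \<bar>f x\<bar> \<le> B"
  shows "integrable M f"
  by (rule finite_measure.integrable_const_bound[OF assms(1) AE_I2 assms(2)]) (use assms(3) in simp)

lemma integrable_if_bounded_continuous:
  fixes g :: "'a::topological_space \<Rightarrow> real"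
  assumes "finite_measure M" "sets M = sets borel" "continuous_on UNIV g" "bounded (range g)"
  shows "integrable M g"
proof -
  obtain B where "\<And>x. \<bar>g x\<bar> \<le> B" using assms(4) by (auto simp: bounded_real)
  then show ?thesis
    by (rule integrable_if_bounded[OF assms(1) borel_measurable_if_continuous[OF assms(2,3)]])
qed

lemma compact_open_sandwich:
  fixes M :: "'a::{second_countable_topology, complete_space} measure"
  assumes "finite_measure M" and sets: "sets M = sets borel" and B: "B \<in> sets borel" and e: "e > 0"
  obtains K U where "compact K" "open U" "K \<subseteq> B" "B \<subseteq> U" "measure M (U - K) < e"
proof -
  interpret finite_measure M by fact
  have fin: "emeasure M (space M) \<noteq> \<infinity>" by simp
  obtain K where K: "compact K" "K \<subseteq> B" "measure M B - e/2 < measure M K"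
  proof (cases "e/2 \<le> measure M B")
    case True
    then have "ennreal (measure M B - e/2) < emeasure M B"
      using e by (simp add: emeasure_eq_measure ennreal_lessI)
    then obtain K where "K \<subseteq> B" "compact K" "ennreal (measure M B - e/2) < emeasure M K"
      unfolding inner_regular[OF sets fin B] by (auto simp: less_SUP_iff)
    then show ?thesis
      using that True by (simp add: emeasure_eq_measure ennreal_less_iff)
  next
    case False
    then show ?thesis by (intro that[of "{}"]) auto
  qed
  have "emeasure M B < ennreal (measure M B + e/2)"
    using e by (simp add: emeasure_eq_measure ennreal_lessI)
  then obtain U where U: "open U" "B \<subseteq> U" "emeasure M U < ennreal (measure M B + e/2)"
    unfolding outer_regular[OF sets fin B] by (auto simp: INF_less_iff)
  have sets_KU: "K \<in> sets M" "U \<in> sets M"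
    using K(1) U(1) sets by (auto intro: borel_closed compact_imp_closed)
  have "measure M (U - K) = measure M U - measure M K"
    using K(2) U(2) sets_KU by (intro finite_measure_Diff) auto
  also have "\<dots> < e"
    using K(3) U(3) by (simp add: emeasure_eq_measure ennreal_less_iff)
  finally show ?thesis by (rule that[OF K(1) U(1) K(2) U(2)])
qed

lemma prob_space_tight:
  fixes M :: "'a::{second_countable_topology, complete_space} measure"
  assumes "prob_space M" "sets M = sets borel" "e > 0"
  obtains K where "compact K" "measure M (- K) < e"
proof -
  obtain K U where "compact K" "UNIV \<subseteq> U" "measure M (U - K) < e"
    by (rule compact_open_sandwich[OF prob_space.finite_measure[OF assms(1)] assms(2) sets.top assms(3)])
      auto
  moreover from \<open>UNIV \<subseteq> U\<close> have "U - K = - K" by auto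
  ultimately show ?thesis by (intro that) auto
qed

lemma indicator_L1_approx:
  fixes M :: "'a::{second_countable_topology, complete_space} measure" and e :: real
  assumes M: "finite_measure M" and sets: "sets M = sets borel" and B: "B \<in> sets borel" and e: "e > 0"
  obtains g where "continuous_on UNIV g" "\<And>x. g x \<in> {0..1}" "(\<integral>x. \<bar>indicator B x - g x\<bar> \<partial>M) < e"
proof -
  interpret finite_measure M by fact
  obtain K U where KU: "compact K" "open U" "K \<subseteq> B" "B \<subseteq> U" "measure M (U - K) < e"
    using compact_open_sandwich[OF M sets B e] .
  have normal: "normal_space (euclidean :: 'a topology)"
    by (rule metrizable_imp_normal_space[OF metrizable_space_euclidean])
  have "closedin euclidean (- U)" "closedin euclidean K" "disjnt (- U) K"
    using KU by (auto simp: compact_imp_closed disjnt_def)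
  then obtain g where g: "continuous_map euclidean (top_of_set {0..1}) g"
    "g ` (- U) \<subseteq> {0}" "g ` K \<subseteq> {1::real}"
    using Urysohn_lemma[OF normal, of "- U" K 0 1] by auto
  have g_cont: "continuous_on UNIV g" and g_range: "\<And>x. g x \<in> {0..1}"
    using g(1) by (auto simp: continuous_map_in_subtopology)
  have sets_KU: "K \<in> sets M" "U \<in> sets M"
    using KU(1,2) sets by (auto intro: borel_closed compact_imp_closed)
  have diff_le: "\<bar>indicator B x - g x\<bar> \<le> indicator (U - K) x" for x
    using g_range[of x] g(2,3) KU(3,4) by (auto simp: indicator_def)
  have diff_bounded: "\<bar>\<bar>indicator B x - g x\<bar>\<bar> \<le> 1" for x
    using g_range[of x] by (auto simp: indicator_def)
  have "(\<integral>x. \<bar>indicator B x - g x\<bar> \<partial>M) \<le> (\<integral>x. indicator (U - K) x \<partial>M)"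
  proof (rule integral_mono[OF _ _ diff_le])
    show "integrable M (\<lambda>x. \<bar>indicator B x - g x\<bar>)"
      using B sets borel_measurable_if_continuous[OF sets g_cont]
      by (intro integrable_if_bounded[OF M _ diff_bounded]) auto
    show "integrable M (indicator (U - K) :: 'a \<Rightarrow> real)"
      using sets_KU by (intro integrable_real_indicator) (simp_all add: less_top[symmetric])
  qed
  also have "\<dots> = measure M (U - K)"
    using sets_KU by simp
  finally show ?thesis
    using that g_cont g_range KU(5) by simp
qed

definition L1_approximable_by_continuous :: "'a::topological_space measure \<Rightarrow> ('a \<Rightarrow> real) \<Rightarrow> bool" where
  "L1_approximable_by_continuous M f \<longleftrightarrow>
    (\<forall>e>0. \<exists>g. continuous_on UNIV g \<and> bounded (range g) \<and> (\<integral>x. \<bar>f x - g x\<bar> \<partial>M) < e)"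

lemma L1_approximable_indicator_scaleR:
  fixes M :: "'a::{second_countable_topology, complete_space} measure"
  assumes M: "finite_measure M" and sets: "sets M = sets borel" and A: "A \<in> sets M"
  shows "L1_approximable_by_continuous M (\<lambda>x. indicator A x *\<^sub>R c)"
  unfolding L1_approximable_by_continuous_def
proof (intro allI impI)
  fix e :: real assume "e > 0"
  then have "e / (\<bar>c\<bar> + 1) > 0" by simp
  then obtain g where g: "continuous_on UNIV g" "\<And>x. g x \<in> {0..1}"
    "(\<integral>x. \<bar>indicator A x - g x\<bar> \<partial>M) < e / (\<bar>c\<bar> + 1)"
    using indicator_L1_approx[OF M sets] A sets by (metis sets_eq_imp_space_eq)
  have "\<bar>indicator A x *\<^sub>R c - c * g x\<bar> = \<bar>c\<bar> * \<bar>indicator A x - g x\<bar>" for x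
    by (simp add: abs_mult[symmetric] algebra_simps)
  then have "(\<integral>x. \<bar>indicator A x *\<^sub>R c - c * g x\<bar> \<partial>M) = \<bar>c\<bar> * (\<integral>x. \<bar>indicator A x - g x\<bar> \<partial>M)"
    by simp
  also have "\<dots> \<le> \<bar>c\<bar> * (e / (\<bar>c\<bar> + 1))"
    using g(3) by (intro mult_left_mono) auto
  also have "\<dots> < e"
    using \<open>e > 0\<close> by (simp add: field_simps)
  finally have "(\<integral>x. \<bar>indicator A x *\<^sub>R c - c * g x\<bar> \<partial>M) < e" .
  moreover have "\<bar>c * g x\<bar> \<le> \<bar>c\<bar>" for x
    using g(2)[of x] by (simp add: abs_mult mult_left_le)
  then have "bounded (range (\<lambda>x. c * g x))"
    by (auto simp: bounded_real)
  moreover have "continuous_on UNIV (\<lambda>x. c * g x)"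
    using g(1) by (intro continuous_intros)
  ultimately show "\<exists>g. continuous_on UNIV g \<and> bounded (range g) \<and> (\<integral>x. \<bar>indicator A x *\<^sub>R c - g x\<bar> \<partial>M) < e"
    by blast
qed

lemma L1_approximable_add:
  assumes M: "finite_measure M" and sets: "sets M = sets borel"
    and f: "integrable M f1" "integrable M f2"
    and approx: "L1_approximable_by_continuous M f1" "L1_approximable_by_continuous M f2"
  shows "L1_approximable_by_continuous M (\<lambda>x. f1 x + f2 x)"
  unfolding L1_approximable_by_continuous_def
proof (intro allI impI)
  fix e :: real assume "e > 0"
  then obtain g1 g2 where g1: "continuous_on UNIV g1" "bounded (range g1)" "(\<integral>x. \<bar>f1 x - g1 x\<bar> \<partial>M) < e / 2"
    and g2: "continuous_on UNIV g2" "bounded (range g2)" "(\<integral>x. \<bar>f2 x - g2 x\<bar> \<partial>M) < e / 2"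
    using approx unfolding L1_approximable_by_continuous_def by (meson half_gt_zero)
  have int_g: "integrable M g1" "integrable M g2"
    using integrable_if_bounded_continuous[OF M sets] g1 g2 by auto
  have "(\<integral>x. \<bar>(f1 x + f2 x) - (g1 x + g2 x)\<bar> \<partial>M) \<le> (\<integral>x. \<bar>f1 x - g1 x\<bar> + \<bar>f2 x - g2 x\<bar> \<partial>M)"
    using f int_g by (intro integral_mono) auto
  also have "\<dots> < e"
    using f int_g g1(3) g2(3) by (subst Bochner_Integration.integral_add) auto
  finally show "\<exists>g. continuous_on UNIV g \<and> bounded (range g) \<and> (\<integral>x. \<bar>f1 x + f2 x - g x\<bar> \<partial>M) < e"
    using g1(1,2) g2(1,2) by (intro exI[of _ "\<lambda>x. g1 x + g2 x"]) (auto intro!: continuous_intros bounded_plus_comp)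
qed

lemma L1_dist_triangle:
  fixes f g h :: "'a \<Rightarrow> real"
  assumes "integrable M f" "integrable M g" "integrable M h"
  shows "(\<integral>x. \<bar>f x - h x\<bar> \<partial>M) \<le> (\<integral>x. \<bar>f x - g x\<bar> \<partial>M) + (\<integral>x. \<bar>g x - h x\<bar> \<partial>M)"
proof -
  have "(\<integral>x. \<bar>f x - h x\<bar> \<partial>M) \<le> (\<integral>x. \<bar>f x - g x\<bar> + \<bar>g x - h x\<bar> \<partial>M)"
    using assms by (intro integral_mono) auto
  also have "\<dots> = (\<integral>x. \<bar>f x - g x\<bar> \<partial>M) + (\<integral>x. \<bar>g x - h x\<bar> \<partial>M)"
    using assms by (intro Bochner_Integration.integral_add) auto
  finally show ?thesis .
qed

lemma L1_approximable_dominated_limit: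
  assumes M: "finite_measure M" and sets: "sets M = sets borel"
    and s: "\<And>i. integrable M (s i)" "\<And>i. L1_approximable_by_continuous M (s i)"
    and lim: "\<And>x. x \<in> space M \<Longrightarrow> (\<lambda>i. s i x) \<longlonglongrightarrow> f x"
    and dominated: "\<And>i x. x \<in> space M \<Longrightarrow> \<bar>s i x\<bar> \<le> 2 * \<bar>f x\<bar>" and f: "integrable M f"
  shows "L1_approximable_by_continuous M f"
  unfolding L1_approximable_by_continuous_def
proof (intro allI impI)
  fix e :: real assume "e > 0"
  have "(\<lambda>i. \<integral>x. \<bar>s i x - f x\<bar> \<partial>M) \<longlonglongrightarrow> (\<integral>x. 0 \<partial>M)"
  proof (rule integral_dominated_convergence[where w="\<lambda>x. 3 * \<bar>f x\<bar>"])
    show "AE x in M. (\<lambda>i. \<bar>s i x - f x\<bar>) \<longlonglongrightarrow> 0"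
      using lim by (intro AE_I2) (simp add: LIM_zero tendsto_rabs_zero)
    show "AE x in M. norm \<bar>s i x - f x\<bar> \<le> 3 * \<bar>f x\<bar>" for i
    proof (rule AE_I2)
      fix x assume "x \<in> space M"
      with dominated[of x i] show "norm \<bar>s i x - f x\<bar> \<le> 3 * \<bar>f x\<bar>" by simp
    qed
  qed (use s(1) f in auto)
  then have "\<forall>\<^sub>F i in sequentially. (\<integral>x. \<bar>s i x - f x\<bar> \<partial>M) < e / 2"
    using \<open>e > 0\<close> by (intro order_tendstoD(2)) auto
  then obtain i where i: "(\<integral>x. \<bar>s i x - f x\<bar> \<partial>M) < e / 2"
    unfolding eventually_sequentially by (meson order_refl)
  obtain g where g: "continuous_on UNIV g" "bounded (range g)" "(\<integral>x. \<bar>s i x - g x\<bar> \<partial>M) < e / 2"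
    using s(2)[of i] \<open>e > 0\<close> unfolding L1_approximable_by_continuous_def by (meson half_gt_zero)
  have "(\<integral>x. \<bar>f x - g x\<bar> \<partial>M) \<le> (\<integral>x. \<bar>f x - s i x\<bar> \<partial>M) + (\<integral>x. \<bar>s i x - g x\<bar> \<partial>M)"
    by (rule L1_dist_triangle[OF f s(1) integrable_if_bounded_continuous[OF M sets g(1,2)]])
  also have "\<dots> < e"
    using i g(3) by (simp add: abs_minus_commute)
  finally show "\<exists>g. continuous_on UNIV g \<and> bounded (range g) \<and> (\<integral>x. \<bar>f x - g x\<bar> \<partial>M) < e"
    using g(1,2) by blast
qed

lemma L1_approximable_if_integrable:
  fixes M :: "'a::{second_countable_topology, complete_space} measure" and f :: "'a \<Rightarrow> real"
  assumes M: "finite_measure M" and sets: "sets M = sets borel" and f: "integrable M f"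
  shows "L1_approximable_by_continuous M f"
  using f
proof (induction rule: integrable_induct)
  case (base A c)
  show ?case by (rule L1_approximable_indicator_scaleR[OF M sets base(1)])
next
  case (add f1 f2)
  show ?case by (rule L1_approximable_add[OF M sets add.hyps add.IH])
next
  case (lim f s)
  show ?case
  proof (rule L1_approximable_dominated_limit[OF M sets lim.hyps(1) lim.IH lim.hyps(2) _ lim.hyps(4)])
    show "\<bar>s i x\<bar> \<le> 2 * \<bar>f x\<bar>" if "x \<in> space M" for i x
      using lim.hyps(3)[OF that] by simp
  qed
qed

lemma bounded_continuous_L1_approx:
  fixes M :: "'a::{second_countable_topology, complete_space} measure" and f :: "'a \<Rightarrow> real" and e :: real
  assumes M: "finite_measure M" and sets: "sets M = sets borel"
    and f: "f \<in> borel_measurable M" "\<And>x. \<bar>f x\<bar> \<le> B" and e: "e > 0"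
  obtains g where "continuous_on UNIV g" "\<And>x. \<bar>g x\<bar> \<le> B" "(\<integral>x. \<bar>f x - g x\<bar> \<partial>M) < e"
proof -
  have "integrable M f" by (rule integrable_if_bounded[OF M f])
  then obtain g0 where g0: "continuous_on UNIV g0" "bounded (range g0)" "(\<integral>x. \<bar>f x - g0 x\<bar> \<partial>M) < e"
    using L1_approximable_if_integrable[OF M sets] e unfolding L1_approximable_by_continuous_def by blast
  define g where "g x = max (- B) (min B (g0 x))" for x
  have g_cont: "continuous_on UNIV g"
    unfolding g_def using g0(1) by (intro continuous_intros)
  have g_bounded: "\<bar>g x\<bar> \<le> B" for x
    unfolding g_def using f(2)[of x] by auto
  have "bounded (range g)"
    using g_bounded by (auto simp: bounded_real)
  then have int_g: "integrable M g" "integrable M g0"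
    using integrable_if_bounded_continuous[OF M sets] g_cont g0(1,2) by auto
  have "(\<integral>x. \<bar>f x - g x\<bar> \<partial>M) \<le> (\<integral>x. \<bar>f x - g0 x\<bar> \<partial>M)"
  proof (rule integral_mono)
    show "\<bar>f x - g x\<bar> \<le> \<bar>f x - g0 x\<bar>" for x
      unfolding g_def using f(2)[of x] by (auto simp: abs_le_iff)
  qed (use \<open>integrable M f\<close> int_g in auto)
  with g0(3) g_cont g_bounded that show ?thesis by simp
qed

section \<open>The narrow topology and tight families\<close>

lemma topspace_narrow_topology: "topspace narrow_topology = UNIV"
proof -
  have "UNIV \<in> {{\<nu>::'a measure. (\<integral>z. f z \<partial>\<nu>) \<in> U} | f U.
      continuous_on UNIV f \<and> bounded (range f) \<and> open (U :: real set)}"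
    by (intro CollectI exI[of _ "\<lambda>z::'a. 0::real"] exI[of _ UNIV]) auto
  then show ?thesis
    unfolding narrow_topology_def by auto
qed

lemma openin_narrow_topology_integral:
  fixes f :: "'a::topological_space \<Rightarrow> real"
  assumes "continuous_on UNIV f" "bounded (range f)" "open U"
  shows "openin narrow_topology {\<nu>. (\<integral>z. f z \<partial>\<nu>) \<in> U}"
  unfolding narrow_topology_def openin_topology_generated_by_iff
  by (rule generate_topology_on.Basis) (use assms in blast)

lemma openin_narrow_topology_integrals_close:
  fixes T :: "('a::topological_space \<Rightarrow> real) set"
  assumes "finite T" "\<And>f. f \<in> T \<Longrightarrow> continuous_on UNIV f \<and> bounded (range f)"
  shows "openin narrow_topology {\<nu>. \<forall>f\<in>T. \<bar>(\<integral>z. f z \<partial>\<nu>) - (\<integral>z. f z \<partial>\<nu>0)\<bar> < e}"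
proof -
  have "openin narrow_topology ((\<Inter>f\<in>T. {\<nu>. (\<integral>z. f z \<partial>\<nu>) \<in> ball (\<integral>z. f z \<partial>\<nu>0) e}) \<inter> topspace narrow_topology)"
    using assms by (intro openin_INT openin_narrow_topology_integral) auto
  also have "(\<Inter>f\<in>T. {\<nu>. (\<integral>z. f z \<partial>\<nu>) \<in> ball (\<integral>z. f z \<partial>\<nu>0) e}) \<inter> topspace narrow_topology =
      {\<nu>. \<forall>f\<in>T. \<bar>(\<integral>z. f z \<partial>\<nu>) - (\<integral>z. f z \<partial>\<nu>0)\<bar> < e}"
    by (auto simp: topspace_narrow_topology dist_real_def abs_minus_commute)
  finally show ?thesis .
qed

definition uniformly_tight :: "'a::topological_space measure set \<Rightarrow> bool" where
  "uniformly_tight C \<longleftrightarrow> (\<forall>\<eta>>0. \<exists>K. compact K \<and> (\<forall>\<nu>\<in>C. measure \<nu> (- K) \<le> \<eta>))"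

lemma abs_integral_le_split_compl:
  fixes f :: "'a::topological_space \<Rightarrow> real"
  assumes N: "prob_space N" "sets N = sets borel" and f: "f \<in> borel_measurable N" and K: "closed K"
    and bound_K: "\<And>z. z \<in> K \<Longrightarrow> \<bar>f z\<bar> \<le> c" and bound: "\<And>z. \<bar>f z\<bar> \<le> C" and "c \<ge> 0"
  shows "\<bar>\<integral>z. f z \<partial>N\<bar> \<le> c + C * measure N (- K)"
proof -
  interpret prob_space N by fact
  have compl: "- K \<in> sets N" using K N(2) by (simp add: borel_open open_Compl)
  have major: "\<bar>f z\<bar> \<le> c + C * indicator (- K) z" for z
    using bound_K[of z] bound[of z] \<open>c \<ge> 0\<close> by (cases "z \<in> K") auto
  have "\<bar>\<integral>z. f z \<partial>N\<bar> \<le> (\<integral>z. \<bar>f z\<bar> \<partial>N)"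
    by (rule integral_abs_bound)
  also have "\<dots> \<le> (\<integral>z. c + C * indicator (- K) z \<partial>N)"
  proof (rule integral_mono[OF _ _ major])
    show "integrable N (\<lambda>z. \<bar>f z\<bar>)"
      using integrable_if_bounded[OF finite_measure f bound] by simp
    show "integrable N (\<lambda>z. c + C * indicator (- K) z)"
      using compl by (simp add: less_top[symmetric])
  qed
  also have "\<dots> = (\<integral>z. c \<partial>N) + (\<integral>z. C * indicator (- K) z \<partial>N)"
    using compl by (intro Bochner_Integration.integral_add) (simp_all add: less_top[symmetric])
  also have "\<dots> = c + C * measure N (- K)"
    using compl prob_space by simp
  finally show ?thesis .
qed

lemma continuous_on_slice:
  assumes "continuous_on UNIV G"
  shows "continuous_on UNIV (\<lambda>z'. G (z, z'))"
  by (rule continuous_on_compose2[OF assms]) (auto intro: continuous_intros)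

lemma sets_pair_measure_borel:
  assumes "sets N1 = sets (borel :: 'a::second_countable_topology measure)"
    and "sets N2 = sets (borel :: 'b::second_countable_topology measure)"
  shows "sets (N1 \<Otimes>\<^sub>M N2) = sets (borel :: ('a \<times> 'b) measure)"
  using sets_pair_measure_cong[OF assms] borel_prod by metis

lemma integrable_pair_measure_if_bounded:
  fixes G :: "'a::second_countable_topology \<times> 'b::second_countable_topology \<Rightarrow> real"
  assumes "prob_space N1" "sets N1 = sets borel" "prob_space N2" "sets N2 = sets borel"
    and "G \<in> borel_measurable borel" "\<And>u. \<bar>G u\<bar> \<le> B"
  shows "integrable (N1 \<Otimes>\<^sub>M N2) G"
proof -
  interpret N1: prob_space N1 by fact
  interpret N2: prob_space N2 by fact
  interpret pair_prob_space N1 N2 ..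
  have "G \<in> borel_measurable (N1 \<Otimes>\<^sub>M N2)"
    by (subst measurable_cong_sets[OF sets_pair_measure_borel[OF assms(2,4)] refl]) (rule assms(5))
  then show ?thesis
    by (rule integrable_if_bounded[OF P.finite_measure _ assms(6)])
qed

lemma borel_measurable_slice_integral:
  fixes G :: "'a::second_countable_topology \<times> 'b::second_countable_topology \<Rightarrow> real"
  assumes "sets N1 = sets borel" "prob_space N2" "sets N2 = sets borel" "G \<in> borel_measurable borel"
  shows "(\<lambda>z. \<integral>z'. G (z, z') \<partial>N2) \<in> borel_measurable N1"
proof -
  interpret N2: prob_space N2 by fact
  have "G \<in> borel_measurable (N1 \<Otimes>\<^sub>M N2)"
    by (subst measurable_cong_sets[OF sets_pair_measure_borel[OF assms(1,3)] refl]) (rule assms(4))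
  then show ?thesis
    using N2.borel_measurable_lebesgue_integral[of "\<lambda>z z'. G (z, z')" N1] by simp
qed

lemma borel_measurable_slice:
  fixes G :: "'a::second_countable_topology \<times> 'b::second_countable_topology \<Rightarrow> real"
  assumes "sets N = sets borel" "G \<in> borel_measurable borel"
  shows "(\<lambda>z'. G (z, z')) \<in> borel_measurable N"
proof -
  have "(\<lambda>z'::'b. (z, z')) \<in> borel \<rightarrow>\<^sub>M borel"
    by (intro borel_measurable_continuous_onI continuous_intros)
  from measurable_compose[OF this assms(2)] show ?thesis
    by (simp add: measurable_cong_sets[OF assms(1) refl])
qed

lemma abs_slice_integral_le:
  fixes G :: "'a::second_countable_topology \<times> 'b::second_countable_topology \<Rightarrow> real"
  assumes "prob_space N" "sets N = sets borel" "G \<in> borel_measurable borel" "\<And>u. \<bar>G u\<bar> \<le> B"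
  shows "\<bar>\<integral>z'. G (z, z') \<partial>N\<bar> \<le> B"
proof -
  interpret prob_space N by fact
  have "\<bar>\<integral>z'. G (z, z') \<partial>N\<bar> \<le> (\<integral>z'. \<bar>G (z, z')\<bar> \<partial>N)"
    by (rule integral_abs_bound)
  also have "\<dots> \<le> B"
  proof (rule integral_le_const)
    show "integrable N (\<lambda>z'. \<bar>G (z, z')\<bar>)"
      using integrable_if_bounded[OF finite_measure borel_measurable_slice[OF assms(2,3)] assms(4)]
      by simp
    show "AE z' in N. \<bar>G (z, z')\<bar> \<le> B"
      using assms(4) by simp
  qed
  finally show ?thesis .
qed

lemma borel_measurable_transpose:
  fixes G :: "'a::second_countable_topology \<times> 'b::second_countable_topology \<Rightarrow> real"
  assumes "G \<in> borel_measurable borel"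
  shows "(\<lambda>u. G (snd u, fst u)) \<in> borel_measurable borel"
proof -
  have "(\<lambda>u::'b \<times> 'a. (snd u, fst u)) \<in> borel \<rightarrow>\<^sub>M borel"
    by (intro borel_measurable_continuous_onI continuous_intros)
  from measurable_compose[OF this assms] show ?thesis .
qed

lemma integral_pair_measure_diff:
  fixes G :: "'a::second_countable_topology \<times> 'a \<Rightarrow> real"
  assumes N: "prob_space N" "sets N = sets borel" and N0: "prob_space N0" "sets N0 = sets borel"
    and G: "G \<in> borel_measurable borel" "\<And>u. \<bar>G u\<bar> \<le> B"
  shows "(\<integral>u. G u \<partial>(N \<Otimes>\<^sub>M N)) - (\<integral>u. G u \<partial>(N0 \<Otimes>\<^sub>M N0)) =
    (\<integral>z. (\<integral>z'. G (z, z') \<partial>N) - (\<integral>z'. G (z, z') \<partial>N0) \<partial>N) +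
    (\<integral>z'. (\<integral>z. G (z, z') \<partial>N) - (\<integral>z. G (z, z') \<partial>N0) \<partial>N0)"
proof -
  interpret N: prob_space N by fact
  interpret N0: prob_space N0 by fact
  interpret NN: pair_prob_space N N ..
  interpret N0N0: pair_prob_space N0 N0 ..
  interpret NN0: pair_prob_space N N0 ..
  define G' where "G' u = G (snd u, fst u)" for u
  have G': "G' \<in> borel_measurable borel" "\<And>u. \<bar>G' u\<bar> \<le> B"
    unfolding G'_def using borel_measurable_transpose[OF G(1)] G(2) by auto
  have int_slices: "integrable N (\<lambda>z. \<integral>z'. G (z, z') \<partial>M)" "integrable N0 (\<lambda>z'. \<integral>z. G' (z', z) \<partial>M)"
    if "prob_space M" "sets M = sets borel" for M
    using integrable_if_bounded[OF N.finite_measure borel_measurable_slice_integral[OF N(2) that G(1)]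
        abs_slice_integral_le[OF that G]]
      integrable_if_bounded[OF N0.finite_measure borel_measurable_slice_integral[OF N0(2) that G'(1)]
        abs_slice_integral_le[OF that G']]
    by auto
  have "(\<integral>u. G u \<partial>(N \<Otimes>\<^sub>M N)) = (\<integral>z. (\<integral>z'. G (z, z') \<partial>N) \<partial>N)"
    using NN.integral_fst'[OF integrable_pair_measure_if_bounded[OF N N G]] by simp
  moreover have "(\<integral>u. G u \<partial>(N0 \<Otimes>\<^sub>M N0)) = (\<integral>z'. (\<integral>z. G (z, z') \<partial>N0) \<partial>N0)"
    using N0N0.integral_snd[of "\<lambda>z z'. G (z, z')"] integrable_pair_measure_if_bounded[OF N0 N0 G] by simp
  moreover have "(\<integral>z. (\<integral>z'. G (z, z') \<partial>N0) \<partial>N) = (\<integral>z'. (\<integral>z. G (z, z') \<partial>N) \<partial>N0)"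
    using NN0.integral_fst'[OF integrable_pair_measure_if_bounded[OF N N0 G]]
      NN0.integral_snd[of "\<lambda>z z'. G (z, z')"] integrable_pair_measure_if_bounded[OF N N0 G]
    by simp
  ultimately show ?thesis
    using int_slices[OF N] int_slices[OF N0] by (simp add: G'_def)
qed

lemma abs_integral_pair_measure_diff_le:
  fixes G :: "'a::second_countable_topology \<times> 'a \<Rightarrow> real"
  assumes N: "prob_space N" "sets N = sets borel" and N0: "prob_space N0" "sets N0 = sets borel"
    and G: "G \<in> borel_measurable borel" "\<And>u. \<bar>G u\<bar> \<le> B" and K: "closed K" and "c \<ge> 0"
    and close1: "\<And>z. z \<in> K \<Longrightarrow> \<bar>(\<integral>z'. G (z, z') \<partial>N) - (\<integral>z'. G (z, z') \<partial>N0)\<bar> \<le> c"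
    and close2: "\<And>z'. z' \<in> K \<Longrightarrow> \<bar>(\<integral>z. G (z, z') \<partial>N) - (\<integral>z. G (z, z') \<partial>N0)\<bar> \<le> c"
  shows "\<bar>(\<integral>u. G u \<partial>(N \<Otimes>\<^sub>M N)) - (\<integral>u. G u \<partial>(N0 \<Otimes>\<^sub>M N0))\<bar>
    \<le> 2 * c + 2 * B * (measure N (- K) + measure N0 (- K))"
proof -
  define G' where "G' u = G (snd u, fst u)" for u
  have G': "G' \<in> borel_measurable borel" "\<And>u. \<bar>G' u\<bar> \<le> B"
    unfolding G'_def using borel_measurable_transpose[OF G(1)] G(2) by auto
  have "\<bar>\<integral>z. (\<integral>z'. G (z, z') \<partial>N) - (\<integral>z'. G (z, z') \<partial>N0) \<partial>N\<bar> \<le> c + 2 * B * measure N (- K)"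
  proof (rule abs_integral_le_split_compl[OF N _ K close1 _ \<open>c \<ge> 0\<close>])
    show "(\<lambda>z. (\<integral>z'. G (z, z') \<partial>N) - (\<integral>z'. G (z, z') \<partial>N0)) \<in> borel_measurable N"
      using borel_measurable_slice_integral[OF N(2) N G(1)] borel_measurable_slice_integral[OF N(2) N0 G(1)]
      by simp
    show "\<bar>(\<integral>z'. G (z, z') \<partial>N) - (\<integral>z'. G (z, z') \<partial>N0)\<bar> \<le> 2 * B" for z
      using abs_slice_integral_le[OF N G, of z] abs_slice_integral_le[OF N0 G, of z] by linarith
  qed
  moreover have "\<bar>\<integral>z'. (\<integral>z. G' (z', z) \<partial>N) - (\<integral>z. G' (z', z) \<partial>N0) \<partial>N0\<bar> \<le> c + 2 * B * measure N0 (- K)"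
  proof (rule abs_integral_le_split_compl[OF N0 _ K _ _ \<open>c \<ge> 0\<close>])
    show "(\<lambda>z'. (\<integral>z. G' (z', z) \<partial>N) - (\<integral>z. G' (z', z) \<partial>N0)) \<in> borel_measurable N0"
      using borel_measurable_slice_integral[OF N0(2) N G'(1)] borel_measurable_slice_integral[OF N0(2) N0 G'(1)]
      by simp
    show "\<bar>(\<integral>z. G' (z', z) \<partial>N) - (\<integral>z. G' (z', z) \<partial>N0)\<bar> \<le> c" if "z' \<in> K" for z'
      using close2[OF that] by (simp add: G'_def)
    show "\<bar>(\<integral>z. G' (z', z) \<partial>N) - (\<integral>z. G' (z', z) \<partial>N0)\<bar> \<le> 2 * B" for z'
      using abs_slice_integral_le[OF N G', of z'] abs_slice_integral_le[OF N0 G', of z'] by linarith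
  qed
  ultimately show ?thesis
    using integral_pair_measure_diff[OF N N0 G] by (simp add: G'_def algebra_simps)
qed

lemma slice_integrals_close_on_compact:
  fixes G :: "'a::{metric_space, second_countable_topology} \<times> 'a \<Rightarrow> real"
  assumes G: "continuous_on UNIV G" "\<And>u. \<bar>G u\<bar> \<le> B" and K: "compact K" and e: "e > 0"
  obtains F where "finite F"
    "\<And>N N0 z. prob_space N \<Longrightarrow> sets N = sets borel \<Longrightarrow> prob_space N0 \<Longrightarrow> sets N0 = sets borel \<Longrightarrow>
      (\<And>w. w \<in> F \<Longrightarrow> \<bar>(\<integral>z'. G (w, z') \<partial>N) - (\<integral>z'. G (w, z') \<partial>N0)\<bar> < e) \<Longrightarrow> z \<in> K \<Longrightarrow>
      \<bar>(\<integral>z'. G (z, z') \<partial>N) - (\<integral>z'. G (z, z') \<partial>N0)\<bar> \<le> 3 * e + 2 * B * (measure N (- K) + measure N0 (- K))"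
proof -
  have "uniformly_continuous_on (K \<times> K) G"
    using G(1) K by (intro compact_uniformly_continuous compact_Times) (auto intro: continuous_on_subset)
  then obtain d where d: "d > 0"
    "\<And>u u'. u \<in> K \<times> K \<Longrightarrow> u' \<in> K \<times> K \<Longrightarrow> dist u' u < d \<Longrightarrow> dist (G u') (G u) < e"
    using e unfolding uniformly_continuous_on_def by metis
  obtain F where F: "F \<subseteq> K" "finite F" "K \<subseteq> (\<Union>w\<in>F. ball w d)"
    using compactE_image[OF K, of K "\<lambda>w. ball w d"] d(1) by (metis centre_in_ball openI open_ball subsetI UN_I)
  have shift: "\<bar>(\<integral>z'. G (z, z') \<partial>N) - (\<integral>z'. G (w, z') \<partial>N)\<bar> \<le> e + 2 * B * measure N (- K)"
    if N: "prob_space N" "sets N = sets borel" and z: "z \<in> K" and w: "w \<in> F" "dist w z < d" for N z w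
  proof -
    interpret prob_space N by fact
    have meas: "(\<lambda>z'. G (y, z')) \<in> borel_measurable N" for y
      by (rule borel_measurable_if_continuous[OF N(2) continuous_on_slice[OF G(1)]])
    have "(\<integral>z'. G (z, z') \<partial>N) - (\<integral>z'. G (w, z') \<partial>N) = (\<integral>z'. G (z, z') - G (w, z') \<partial>N)"
      using integrable_if_bounded[OF finite_measure meas G(2)] by simp
    also have "\<bar>\<dots>\<bar> \<le> e + 2 * B * measure N (- K)"
    proof (rule abs_integral_le_split_compl[OF N _ compact_imp_closed[OF K]])
      show "\<bar>G (z, z') - G (w, z')\<bar> \<le> e" if "z' \<in> K" for z'
        using d(2)[of "(w, z')" "(z, z')"] w F(1) z that
        by (auto simp: dist_Pair_Pair dist_real_def dist_commute)
      show "\<bar>G (z, z') - G (w, z')\<bar> \<le> 2 * B" for z'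
        using G(2)[of "(z, z')"] G(2)[of "(w, z')"] by linarith
    qed (use meas e in auto)
    finally show ?thesis .
  qed
  show ?thesis
  proof (rule that[OF F(2)])
    fix N N0 z
    assume N: "prob_space N" "sets N = sets borel" and N0: "prob_space N0" "sets N0 = sets borel"
      and close: "\<And>w. w \<in> F \<Longrightarrow> \<bar>(\<integral>z'. G (w, z') \<partial>N) - (\<integral>z'. G (w, z') \<partial>N0)\<bar> < e"
      and z: "z \<in> K"
    obtain w where w: "w \<in> F" "dist w z < d"
      using F(3) z by (auto simp: dist_commute)
    show "\<bar>(\<integral>z'. G (z, z') \<partial>N) - (\<integral>z'. G (z, z') \<partial>N0)\<bar> \<le> 3 * e + 2 * B * (measure N (- K) + measure N0 (- K))"
      using shift[OF N z w] shift[OF N0 z w] close[OF w(1)] by (simp add: algebra_simps)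
  qed
qed

lemma pair_integral_diff_le_test_integrals:
  fixes G :: "'a::{metric_space, second_countable_topology} \<times> 'a \<Rightarrow> real"
  assumes G: "continuous_on UNIV G" "\<And>u. \<bar>G u\<bar> \<le> B" and K: "compact K" and e: "e > 0"
  obtains T :: "('a \<Rightarrow> real) set"
  where "finite T" "\<And>f. f \<in> T \<Longrightarrow> continuous_on UNIV f \<and> bounded (range f)"
    "\<And>N N0. prob_space N \<Longrightarrow> sets N = sets borel \<Longrightarrow> prob_space N0 \<Longrightarrow> sets N0 = sets borel \<Longrightarrow>
      (\<And>f. f \<in> T \<Longrightarrow> \<bar>(\<integral>z. f z \<partial>N) - (\<integral>z. f z \<partial>N0)\<bar> < e) \<Longrightarrow>
      \<bar>(\<integral>u. G u \<partial>(N \<Otimes>\<^sub>M N)) - (\<integral>u. G u \<partial>(N0 \<Otimes>\<^sub>M N0))\<bar> \<le> 6 * e + 6 * B * (measure N (- K) + measure N0 (- K))"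
proof -
  have "B \<ge> 0" using G(2)[of undefined] by linarith
  define G' where "G' u = G (snd u, fst u)" for u
  have G': "continuous_on UNIV G'" "\<And>u. \<bar>G' u\<bar> \<le> B"
    unfolding G'_def using G by (auto intro!: continuous_on_compose2[OF G(1)] continuous_intros)
  obtain F1 where F1: "finite F1"
    "\<And>N N0 z. prob_space N \<Longrightarrow> sets N = sets borel \<Longrightarrow> prob_space N0 \<Longrightarrow> sets N0 = sets borel \<Longrightarrow>
      (\<And>w. w \<in> F1 \<Longrightarrow> \<bar>(\<integral>z'. G (w, z') \<partial>N) - (\<integral>z'. G (w, z') \<partial>N0)\<bar> < e) \<Longrightarrow> z \<in> K \<Longrightarrow>
      \<bar>(\<integral>z'. G (z, z') \<partial>N) - (\<integral>z'. G (z, z') \<partial>N0)\<bar> \<le> 3 * e + 2 * B * (measure N (- K) + measure N0 (- K))"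
    using slice_integrals_close_on_compact[OF G K e] by blast
  obtain F2 where F2: "finite F2"
    "\<And>N N0 z. prob_space N \<Longrightarrow> sets N = sets borel \<Longrightarrow> prob_space N0 \<Longrightarrow> sets N0 = sets borel \<Longrightarrow>
      (\<And>w. w \<in> F2 \<Longrightarrow> \<bar>(\<integral>z'. G' (w, z') \<partial>N) - (\<integral>z'. G' (w, z') \<partial>N0)\<bar> < e) \<Longrightarrow> z \<in> K \<Longrightarrow>
      \<bar>(\<integral>z'. G' (z, z') \<partial>N) - (\<integral>z'. G' (z, z') \<partial>N0)\<bar> \<le> 3 * e + 2 * B * (measure N (- K) + measure N0 (- K))"
    using slice_integrals_close_on_compact[OF G' K e] by blast
  \<comment> \<open>slices of \<open>G\<close> and of its transpose \<open>G'\<close> handle the two orders of integration\<close>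
  define T where "T = (\<lambda>w z'. G (w, z')) ` F1 \<union> (\<lambda>w z'. G' (w, z')) ` F2"
  show ?thesis
  proof (rule that)
    show "finite T" "\<And>f. f \<in> T \<Longrightarrow> continuous_on UNIV f \<and> bounded (range f)"
      unfolding T_def using F1(1) F2(1) continuous_on_slice[OF G(1)] continuous_on_slice[OF G'(1)]
        G(2) G'(2)
      by (auto simp: bounded_real intro!: exI[of _ B])
    fix N N0
    assume N: "prob_space N" "sets N = sets borel" and N0: "prob_space N0" "sets N0 = sets borel"
      and close: "\<And>f. f \<in> T \<Longrightarrow> \<bar>(\<integral>z. f z \<partial>N) - (\<integral>z. f z \<partial>N0)\<bar> < e"
    define c where "c = 3 * e + 2 * B * (measure N (- K) + measure N0 (- K))"
    have close_F1: "\<bar>(\<integral>z'. G (w, z') \<partial>N) - (\<integral>z'. G (w, z') \<partial>N0)\<bar> < e" if "w \<in> F1" for w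
      using close[of "\<lambda>z'. G (w, z')"] that by (simp add: T_def)
    have close_F2: "\<bar>(\<integral>z'. G' (w, z') \<partial>N) - (\<integral>z'. G' (w, z') \<partial>N0)\<bar> < e" if "w \<in> F2" for w
      using close[of "\<lambda>z'. G' (w, z')"] that by (simp add: T_def)
    have "c \<ge> 0"
      unfolding c_def using e \<open>B \<ge> 0\<close> by (intro add_nonneg_nonneg mult_nonneg_nonneg) auto
    have "\<bar>(\<integral>u. G u \<partial>(N \<Otimes>\<^sub>M N)) - (\<integral>u. G u \<partial>(N0 \<Otimes>\<^sub>M N0))\<bar>
        \<le> 2 * c + 2 * B * (measure N (- K) + measure N0 (- K))"
    proof (rule abs_integral_pair_measure_diff_le[OF N N0 borel_measurable_continuous_onI[OF G(1)] G(2)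
          compact_imp_closed[OF K]])
      show "\<bar>(\<integral>z'. G (z, z') \<partial>N) - (\<integral>z'. G (z, z') \<partial>N0)\<bar> \<le> c" if "z \<in> K" for z
        using F1(2)[OF N N0 close_F1 that] by (simp add: c_def)
      show "\<bar>(\<integral>z. G (z, z') \<partial>N) - (\<integral>z. G (z, z') \<partial>N0)\<bar> \<le> c" if "z' \<in> K" for z'
        using F2(2)[OF N N0 close_F2 that] by (simp add: c_def G'_def)
    qed (rule \<open>c \<ge> 0\<close>)
    then show "\<bar>(\<integral>u. G u \<partial>(N \<Otimes>\<^sub>M N)) - (\<integral>u. G u \<partial>(N0 \<Otimes>\<^sub>M N0))\<bar>
        \<le> 6 * e + 6 * B * (measure N (- K) + measure N0 (- K))"
      by (simp add: c_def algebra_simps)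
  qed
qed

lemma pair_integral_diff_less_on_tight_family:
  fixes G :: "'a::{metric_space, second_countable_topology} \<times> 'a \<Rightarrow> real"
  assumes C: "\<And>\<nu>. \<nu> \<in> C \<Longrightarrow> prob_space \<nu> \<and> sets \<nu> = sets borel" and tight: "uniformly_tight C"
    and G: "continuous_on UNIV G" "\<And>u. \<bar>G u\<bar> \<le> B" and "\<epsilon> > 0"
  obtains T :: "('a \<Rightarrow> real) set" and e :: real
  where "finite T" "\<And>f. f \<in> T \<Longrightarrow> continuous_on UNIV f \<and> bounded (range f)" "e > 0"
    "\<And>N N0. N \<in> C \<Longrightarrow> N0 \<in> C \<Longrightarrow> (\<And>f. f \<in> T \<Longrightarrow> \<bar>(\<integral>z. f z \<partial>N) - (\<integral>z. f z \<partial>N0)\<bar> < e) \<Longrightarrow>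
      \<bar>(\<integral>u. G u \<partial>(N \<Otimes>\<^sub>M N)) - (\<integral>u. G u \<partial>(N0 \<Otimes>\<^sub>M N0))\<bar> < \<epsilon>"
proof -
  have "B \<ge> 0" using G(2)[of undefined] by linarith
  define e where "e = \<epsilon> / 12"
  define \<eta> where "\<eta> = \<epsilon> / (24 * (B + 1))"
  have "e > 0" "\<eta> > 0"
    using \<open>\<epsilon> > 0\<close> \<open>B \<ge> 0\<close> by (simp_all add: e_def \<eta>_def)
  have "12 * (B * \<eta>) = \<epsilon> / 2 * (B / (B + 1))"
    using \<open>B \<ge> 0\<close> by (simp add: \<eta>_def field_simps)
  also have "\<dots> < \<epsilon> / 2 * 1"
    using \<open>\<epsilon> > 0\<close> \<open>B \<ge> 0\<close> by (intro mult_strict_left_mono) auto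
  finally have small: "6 * e + 12 * (B * \<eta>) < \<epsilon>"
    by (simp add: e_def)
  have "\<exists>K. compact K \<and> (\<forall>\<nu>\<in>C. measure \<nu> (- K) \<le> \<eta>)"
    using tight \<open>\<eta> > 0\<close> unfolding uniformly_tight_def by simp
  then obtain K where K: "compact K" "\<And>\<nu>. \<nu> \<in> C \<Longrightarrow> measure \<nu> (- K) \<le> \<eta>"
    by auto
  show ?thesis
  proof (rule pair_integral_diff_le_test_integrals[OF G K(1) \<open>e > 0\<close>])
    fix T :: "('a \<Rightarrow> real) set"
    assume T: "finite T" "\<And>f. f \<in> T \<Longrightarrow> continuous_on UNIV f \<and> bounded (range f)"
      and diff_le: "\<And>N N0. prob_space N \<Longrightarrow> sets N = sets borel \<Longrightarrow> prob_space N0 \<Longrightarrow> sets N0 = sets borel \<Longrightarrow>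
        (\<And>f. f \<in> T \<Longrightarrow> \<bar>(\<integral>z. f z \<partial>N) - (\<integral>z. f z \<partial>N0)\<bar> < e) \<Longrightarrow>
        \<bar>(\<integral>u. G u \<partial>(N \<Otimes>\<^sub>M N)) - (\<integral>u. G u \<partial>(N0 \<Otimes>\<^sub>M N0))\<bar> \<le> 6 * e + 6 * B * (measure N (- K) + measure N0 (- K))"
    show ?thesis
    proof (rule that[of T e])
      show "finite T" by (rule T(1))
      show "continuous_on UNIV f \<and> bounded (range f)" if "f \<in> T" for f
        using T(2)[OF that] .
      show "e > 0" by fact
      fix N N0 assume N: "N \<in> C" and N0: "N0 \<in> C"
        and close: "\<And>f. f \<in> T \<Longrightarrow> \<bar>(\<integral>z. f z \<partial>N) - (\<integral>z. f z \<partial>N0)\<bar> < e"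
      have "6 * B * (measure N (- K) + measure N0 (- K)) \<le> 6 * B * (2 * \<eta>)"
        using K(2)[OF N] K(2)[OF N0] \<open>B \<ge> 0\<close> by (intro mult_left_mono) auto
      also have "\<dots> = 12 * (B * \<eta>)"
        by simp
      moreover have "\<bar>(\<integral>u. G u \<partial>(N \<Otimes>\<^sub>M N)) - (\<integral>u. G u \<partial>(N0 \<Otimes>\<^sub>M N0))\<bar>
          \<le> 6 * e + 6 * B * (measure N (- K) + measure N0 (- K))"
        using C[OF N] C[OF N0] close by (intro diff_le) auto
      ultimately show "\<bar>(\<integral>u. G u \<partial>(N \<Otimes>\<^sub>M N)) - (\<integral>u. G u \<partial>(N0 \<Otimes>\<^sub>M N0))\<bar> < \<epsilon>"
        using small by linarith
    qed
  qed
qed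

lemma continuous_map_integral_pair_measure:
  fixes G :: "'a::{metric_space, second_countable_topology} \<times> 'a \<Rightarrow> real"
  assumes C: "\<And>\<nu>. \<nu> \<in> C \<Longrightarrow> prob_space \<nu> \<and> sets \<nu> = sets borel" and tight: "uniformly_tight C"
    and G: "continuous_on UNIV G" "\<And>u. \<bar>G u\<bar> \<le> B"
  shows "continuous_map (subtopology narrow_topology C) euclideanreal (\<lambda>\<nu>. \<integral>u. G u \<partial>(\<nu> \<Otimes>\<^sub>M \<nu>))"
  unfolding mtopology_is_euclidean[symmetric] Met_TC.continuous_map_to_metric
proof (intro ballI allI impI)
  fix \<nu>0 and \<epsilon> :: real
  assume "\<nu>0 \<in> topspace (subtopology narrow_topology C)" and "\<epsilon> > 0"
  then have \<nu>0: "\<nu>0 \<in> C" by (simp add: topspace_narrow_topology)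
  show "\<exists>U. openin (subtopology narrow_topology C) U \<and> \<nu>0 \<in> U \<and>
      (\<forall>\<nu>\<in>U. (\<integral>u. G u \<partial>(\<nu> \<Otimes>\<^sub>M \<nu>)) \<in> Met_TC.mball (\<integral>u. G u \<partial>(\<nu>0 \<Otimes>\<^sub>M \<nu>0)) \<epsilon>)"
  proof (rule pair_integral_diff_less_on_tight_family[OF C tight G \<open>\<epsilon> > 0\<close>])
    fix T :: "('a \<Rightarrow> real) set" and e :: real
    assume T: "finite T" "\<And>f. f \<in> T \<Longrightarrow> continuous_on UNIV f \<and> bounded (range f)" and "e > 0"
      and diff_less: "\<And>N N0. N \<in> C \<Longrightarrow> N0 \<in> C \<Longrightarrow> (\<And>f. f \<in> T \<Longrightarrow> \<bar>(\<integral>z. f z \<partial>N) - (\<integral>z. f z \<partial>N0)\<bar> < e) \<Longrightarrow>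
        \<bar>(\<integral>u. G u \<partial>(N \<Otimes>\<^sub>M N)) - (\<integral>u. G u \<partial>(N0 \<Otimes>\<^sub>M N0))\<bar> < \<epsilon>"
    define U where "U = C \<inter> {\<nu>. \<forall>f\<in>T. \<bar>(\<integral>z. f z \<partial>\<nu>) - (\<integral>z. f z \<partial>\<nu>0)\<bar> < e}"
    have "openin (subtopology narrow_topology C) U"
      unfolding U_def by (intro openin_subtopology_Int2 openin_narrow_topology_integrals_close[OF T])
    moreover have "\<nu>0 \<in> U"
      using \<nu>0 \<open>e > 0\<close> by (simp add: U_def)
    moreover have "\<bar>(\<integral>u. G u \<partial>(\<nu> \<Otimes>\<^sub>M \<nu>)) - (\<integral>u. G u \<partial>(\<nu>0 \<Otimes>\<^sub>M \<nu>0))\<bar> < \<epsilon>" if "\<nu> \<in> U" for \<nu>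
      using that \<nu>0 by (intro diff_less) (auto simp: U_def)
    ultimately show ?thesis
      by (auto simp: dist_real_def abs_minus_commute)
  qed
qed

section \<open>Couplings and the distortion integrand\<close>

lemma measure_networkD:
  assumes "measure_network \<omega> \<mu>"
  shows "prob_space \<mu>" "sets \<mu> = sets borel" "\<exists>B. \<forall>z. \<bar>\<omega> z\<bar> \<le> B" "\<omega> \<in> borel_measurable borel"
  using assms unfolding measure_network_def by auto

lemma measure_network_pair_measure:
  fixes \<omega> :: "'a::polish_space \<times> 'a \<Rightarrow> real"
  assumes "measure_network \<omega> \<mu>"
  shows "finite_measure (\<mu> \<Otimes>\<^sub>M \<mu>)" "sets (\<mu> \<Otimes>\<^sub>M \<mu>) = sets borel" "\<omega> \<in> borel_measurable (\<mu> \<Otimes>\<^sub>M \<mu>)"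
proof -
  note \<mu> = measure_networkD[OF assms]
  show "finite_measure (\<mu> \<Otimes>\<^sub>M \<mu>)"
    using prob_space.finite_measure[OF prob_space_pair[OF \<mu>(1,1)]] .
  show sets: "sets (\<mu> \<Otimes>\<^sub>M \<mu>) = sets borel"
    by (rule sets_pair_measure_borel[OF \<mu>(2,2)])
  show "\<omega> \<in> borel_measurable (\<mu> \<Otimes>\<^sub>M \<mu>)"
    by (subst measurable_cong_sets[OF sets refl]) (rule \<mu>(4))
qed

lemma coupling_prob_space:
  assumes "\<nu> \<in> couplings \<mu>X \<mu>Y"
  shows "prob_space \<nu>" "sets \<nu> = sets borel"
  using assms unfolding couplings_def by auto

lemma uniformly_tight_couplings:
  fixes \<mu>X :: "'a::polish_space measure" and \<mu>Y :: "'b::polish_space measure"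
  assumes X: "prob_space \<mu>X" "sets \<mu>X = sets borel" and Y: "prob_space \<mu>Y" "sets \<mu>Y = sets borel"
  shows "uniformly_tight (couplings \<mu>X \<mu>Y)"
  unfolding uniformly_tight_def
proof (intro allI impI)
  fix \<eta> :: real assume "\<eta> > 0"
  then obtain KX KY where KX: "compact KX" "measure \<mu>X (- KX) < \<eta> / 2"
    and KY: "compact KY" "measure \<mu>Y (- KY) < \<eta> / 2"
    using prob_space_tight[OF X] prob_space_tight[OF Y] by (metis half_gt_zero)
  have "measure \<nu> (- (KX \<times> KY)) \<le> \<eta>" if \<nu>: "\<nu> \<in> couplings \<mu>X \<mu>Y" for \<nu>
  proof -
    interpret prob_space \<nu> using coupling_prob_space(1)[OF \<nu>] .
    have borel: "- KX \<in> sets borel" "- KY \<in> sets borel"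
      using KX(1) KY(1) by (simp_all add: borel_open open_Compl compact_imp_closed)
    have events: "(- KX) \<times> UNIV \<in> events" "UNIV \<times> (- KY) \<in> events"
      using coupling_prob_space(2)[OF \<nu>] KX(1) KY(1)
      by (simp_all add: borel_open open_Times open_Compl compact_imp_closed)
    have "measure \<nu> (- (KX \<times> KY)) \<le> measure \<nu> ((- KX) \<times> UNIV \<union> UNIV \<times> (- KY))"
      using events by (intro finite_measure_mono) auto
    also have "\<dots> \<le> measure \<nu> ((- KX) \<times> UNIV) + measure \<nu> (UNIV \<times> (- KY))"
      using events by (intro measure_subadditive) auto
    also have "\<dots> = measure \<mu>X (- KX) + measure \<mu>Y (- KY)"
      using \<nu> borel unfolding couplings_def measure_def by simp
    finally show ?thesis using KX(2) KY(2) by simp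
  qed
  then show "\<exists>K. compact K \<and> (\<forall>\<nu>\<in>couplings \<mu>X \<mu>Y. measure \<nu> (- K) \<le> \<eta>)"
    using KX(1) KY(1) compact_Times by blast
qed

lemma distr_coupling_fst:
  assumes "\<nu> \<in> couplings \<mu>X \<mu>Y" "sets \<mu>X = sets borel"
  shows "distr \<nu> borel fst = \<mu>X"
proof (rule measure_eqI)
  have sets: "sets \<nu> = sets borel" using coupling_prob_space(2)[OF assms(1)] .
  show "sets (distr \<nu> borel fst) = sets \<mu>X" using assms(2) by simp
  fix A assume "A \<in> sets (distr \<nu> borel fst)"
  then have A: "A \<in> sets borel" by simp
  have "fst -` A \<inter> space \<nu> = A \<times> UNIV"
    using space_eq_UNIV_if_sets_borel[OF sets] by auto
  then show "emeasure (distr \<nu> borel fst) A = emeasure \<mu>X A"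
    using A assms(1) borel_measurable_if_continuous[OF sets continuous_on_fst[OF continuous_on_id]]
    by (simp add: emeasure_distr couplings_def)
qed

lemma distr_coupling_snd:
  assumes "\<nu> \<in> couplings \<mu>X \<mu>Y" "sets \<mu>Y = sets borel"
  shows "distr \<nu> borel snd = \<mu>Y"
proof (rule measure_eqI)
  have sets: "sets \<nu> = sets borel" using coupling_prob_space(2)[OF assms(1)] .
  show "sets (distr \<nu> borel snd) = sets \<mu>Y" using assms(2) by simp
  fix A assume "A \<in> sets (distr \<nu> borel snd)"
  then have A: "A \<in> sets borel" by simp
  have "snd -` A \<inter> space \<nu> = UNIV \<times> A"
    using space_eq_UNIV_if_sets_borel[OF sets] by auto
  then show "emeasure (distr \<nu> borel snd) A = emeasure \<mu>Y A"
    using A assms(1) borel_measurable_if_continuous[OF sets continuous_on_snd[OF continuous_on_id]]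
    by (simp add: emeasure_distr couplings_def)
qed

lemma integral_pair_measure_distr:
  fixes \<pi> :: "'a \<Rightarrow> 'b::second_countable_topology" and h :: "'b \<times> 'b \<Rightarrow> real"
  assumes "prob_space \<nu>" "\<pi> \<in> \<nu> \<rightarrow>\<^sub>M borel" "distr \<nu> borel \<pi> = \<mu>" "h \<in> borel_measurable borel"
  shows "(\<integral>u. h (\<pi> (fst u), \<pi> (snd u)) \<partial>(\<nu> \<Otimes>\<^sub>M \<nu>)) = (\<integral>x. h x \<partial>(\<mu> \<Otimes>\<^sub>M \<mu>))"
proof -
  interpret prob_space \<nu> by fact
  interpret \<mu>: prob_space \<mu>
    using prob_space_distr[OF assms(2)] assms(3) by simp
  have "\<mu> \<Otimes>\<^sub>M \<mu> = distr (\<nu> \<Otimes>\<^sub>M \<nu>) (borel \<Otimes>\<^sub>M borel) (\<lambda>(x, y). (\<pi> x, \<pi> y))"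
    using pair_measure_distr[OF assms(2,2)] assms(3) \<mu>.sigma_finite_measure_axioms by simp
  moreover have "h \<in> borel_measurable (borel \<Otimes>\<^sub>M borel)"
    using assms(4) by (simp add: borel_prod)
  moreover have "(\<lambda>(x, y). (\<pi> x, \<pi> y)) \<in> \<nu> \<Otimes>\<^sub>M \<nu> \<rightarrow>\<^sub>M borel \<Otimes>\<^sub>M borel"
    using assms(2) by measurable
  ultimately show ?thesis
    by (simp add: integral_distr split_beta')
qed

definition distortion :: "('a \<times> 'a \<Rightarrow> real) \<Rightarrow> ('b \<times> 'b \<Rightarrow> real) \<Rightarrow> ('a \<times> 'b) \<times> ('a \<times> 'b) \<Rightarrow> real" where
  "distortion \<omega>X \<omega>Y u = \<bar>\<omega>X (fst (fst u), fst (snd u)) - \<omega>Y (snd (fst u), snd (snd u))\<bar>"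

lemma dis_p_eq_integral_distortion:
  "dis_p p \<omega>X \<omega>Y \<nu> = (\<integral>u. distortion \<omega>X \<omega>Y u powr p \<partial>(\<nu> \<Otimes>\<^sub>M \<nu>)) powr (1 / p)"
  unfolding dis_p_def distortion_def ..

lemma dis_inf_eq_esssup_distortion:
  "dis_inf \<omega>X \<omega>Y \<nu> = esssup (\<nu> \<Otimes>\<^sub>M \<nu>) (\<lambda>u. ereal (distortion \<omega>X \<omega>Y u))"
  unfolding dis_inf_def distortion_def ..

lemma borel_measurable_coordinate_pairs:
  fixes h :: "'a::second_countable_topology \<times> 'a \<Rightarrow> real" and k :: "'b::second_countable_topology \<times> 'b \<Rightarrow> real"
  assumes "h \<in> borel_measurable borel" "k \<in> borel_measurable borel"
  shows "(\<lambda>u::('a \<times> 'b) \<times> ('a \<times> 'b). h (fst (fst u), fst (snd u))) \<in> borel_measurable borel"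
    and "(\<lambda>u::('a \<times> 'b) \<times> ('a \<times> 'b). k (snd (fst u), snd (snd u))) \<in> borel_measurable borel"
proof -
  have "(\<lambda>u::('a \<times> 'b) \<times> ('a \<times> 'b). (fst (fst u), fst (snd u))) \<in> borel \<rightarrow>\<^sub>M borel"
    "(\<lambda>u::('a \<times> 'b) \<times> ('a \<times> 'b). (snd (fst u), snd (snd u))) \<in> borel \<rightarrow>\<^sub>M borel"
    by (intro borel_measurable_continuous_onI continuous_intros)+
  from measurable_compose[OF this(1) assms(1)] measurable_compose[OF this(2) assms(2)]
  show "(\<lambda>u::('a \<times> 'b) \<times> ('a \<times> 'b). h (fst (fst u), fst (snd u))) \<in> borel_measurable borel"
    "(\<lambda>u::('a \<times> 'b) \<times> ('a \<times> 'b). k (snd (fst u), snd (snd u))) \<in> borel_measurable borel"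
    by simp_all
qed

lemma borel_measurable_distortion:
  fixes \<omega>X :: "'a::second_countable_topology \<times> 'a \<Rightarrow> real" and \<omega>Y :: "'b::second_countable_topology \<times> 'b \<Rightarrow> real"
  assumes "\<omega>X \<in> borel_measurable borel" "\<omega>Y \<in> borel_measurable borel"
  shows "distortion \<omega>X \<omega>Y \<in> borel_measurable borel"
  using borel_measurable_coordinate_pairs[OF assms] unfolding distortion_def by measurable

lemma continuous_on_distortion:
  assumes "continuous_on UNIV gX" "continuous_on UNIV gY"
  shows "continuous_on UNIV (distortion gX gY)"
  unfolding distortion_def
  by (intro continuous_intros continuous_on_compose2[OF assms(1)] continuous_on_compose2[OF assms(2)]) auto

lemma distortion_nonneg [simp]: "0 \<le> distortion \<omega>X \<omega>Y u"
  unfolding distortion_def by simp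

lemma distortion_le:
  assumes "\<And>x. \<bar>\<omega>X x\<bar> \<le> BX" "\<And>y. \<bar>\<omega>Y y\<bar> \<le> BY"
  shows "distortion \<omega>X \<omega>Y u \<le> BX + BY"
  using assms(1)[of "(fst (fst u), fst (snd u))"] assms(2)[of "(snd (fst u), snd (snd u))"]
  unfolding distortion_def
  by linarith

lemma integral_coupling_coordinates:
  fixes \<mu>X :: "'a::polish_space measure" and \<mu>Y :: "'b::polish_space measure"
    and h :: "'a \<times> 'a \<Rightarrow> real" and k :: "'b \<times> 'b \<Rightarrow> real"
  assumes \<nu>: "\<nu> \<in> couplings \<mu>X \<mu>Y" and sets: "sets \<mu>X = sets borel" "sets \<mu>Y = sets borel"
    and h: "h \<in> borel_measurable borel" and k: "k \<in> borel_measurable borel"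
  shows "(\<integral>u. h (fst (fst u), fst (snd u)) \<partial>(\<nu> \<Otimes>\<^sub>M \<nu>)) = (\<integral>x. h x \<partial>(\<mu>X \<Otimes>\<^sub>M \<mu>X))"
    and "(\<integral>u. k (snd (fst u), snd (snd u)) \<partial>(\<nu> \<Otimes>\<^sub>M \<nu>)) = (\<integral>y. k y \<partial>(\<mu>Y \<Otimes>\<^sub>M \<mu>Y))"
proof -
  have "fst \<in> \<nu> \<rightarrow>\<^sub>M borel" "snd \<in> \<nu> \<rightarrow>\<^sub>M borel"
    using coupling_prob_space(2)[OF \<nu>]
    by (auto intro!: borel_measurable_if_continuous continuous_on_fst continuous_on_snd continuous_on_id)
  then show "(\<integral>u. h (fst (fst u), fst (snd u)) \<partial>(\<nu> \<Otimes>\<^sub>M \<nu>)) = (\<integral>x. h x \<partial>(\<mu>X \<Otimes>\<^sub>M \<mu>X))"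
    "(\<integral>u. k (snd (fst u), snd (snd u)) \<partial>(\<nu> \<Otimes>\<^sub>M \<nu>)) = (\<integral>y. k y \<partial>(\<mu>Y \<Otimes>\<^sub>M \<mu>Y))"
    using integral_pair_measure_distr[OF coupling_prob_space(1)[OF \<nu>] _ distr_coupling_fst[OF \<nu> sets(1)] h]
      integral_pair_measure_distr[OF coupling_prob_space(1)[OF \<nu>] _ distr_coupling_snd[OF \<nu> sets(2)] k]
    by simp_all
qed

lemma abs_powr_diff_le:
  fixes x y p R :: real
  assumes p: "p \<ge> 1" and xy: "0 \<le> x" "x \<le> R" "0 \<le> y" "y \<le> R"
  shows "\<bar>x powr p - y powr p\<bar> \<le> p * R powr (p - 1) * \<bar>x - y\<bar>"
proof -
  have mvt: "b powr p - a powr p \<le> p * R powr (p - 1) * (b - a)" if ab: "0 \<le> a" "a < b" "b \<le> R" for a b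
  proof -
    have "continuous_on {a..b} (\<lambda>t. t powr p)"
      using ab p by (intro continuous_on_powr') (auto intro: continuous_intros)
    moreover have "(\<lambda>t. t powr p) differentiable (at t)" if "a < t" "t < b" for t
      using has_real_derivative_powr[of t p] that ab real_differentiable_def by fastforce
    ultimately obtain l z where z: "a < z" "z < b" "((\<lambda>t. t powr p) has_real_derivative l) (at z)"
      "b powr p - a powr p = (b - a) * l"
      using MVT[OF ab(2)] by blast
    have "l = p * z powr (p - 1)"
      using DERIV_unique[OF z(3) has_real_derivative_powr[of z p]] z ab by auto
    also have "\<dots> \<le> p * R powr (p - 1)"
      using z ab p by (intro mult_left_mono powr_mono2) auto
    finally show ?thesis
      using z(4) ab by (simp add: mult.commute mult_right_mono)
  qed
  consider "y < x" | "x < y" | "x = y" by linarith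
  then show ?thesis
  proof cases
    case 1
    then show ?thesis using mvt[of y x] powr_mono2[of p y x] xy p by auto
  next
    case 2
    then show ?thesis using mvt[of x y] powr_mono2[of p x y] xy p by auto
  qed simp
qed

lemma abs_distortion_powr_diff_le:
  assumes p: "p \<ge> 1" and bounds: "\<And>x. \<bar>\<omega>X x\<bar> \<le> BX" "\<And>y. \<bar>\<omega>Y y\<bar> \<le> BY"
    "\<And>x. \<bar>gX x\<bar> \<le> BX" "\<And>y. \<bar>gY y\<bar> \<le> BY"
  shows "\<bar>distortion \<omega>X \<omega>Y u powr p - distortion gX gY u powr p\<bar>
    \<le> p * (BX + BY) powr (p - 1) *
      (\<bar>\<omega>X (fst (fst u), fst (snd u)) - gX (fst (fst u), fst (snd u))\<bar> +
       \<bar>\<omega>Y (snd (fst u), snd (snd u)) - gY (snd (fst u), snd (snd u))\<bar>)"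
proof -
  have "\<bar>distortion \<omega>X \<omega>Y u powr p - distortion gX gY u powr p\<bar>
      \<le> p * (BX + BY) powr (p - 1) * \<bar>distortion \<omega>X \<omega>Y u - distortion gX gY u\<bar>"
    using distortion_le[of \<omega>X BX \<omega>Y BY u, OF bounds(1,2)] distortion_le[of gX BX gY BY u, OF bounds(3,4)]
    by (intro abs_powr_diff_le p) auto
  also have "\<dots> \<le> p * (BX + BY) powr (p - 1) *
      (\<bar>\<omega>X (fst (fst u), fst (snd u)) - gX (fst (fst u), fst (snd u))\<bar> +
       \<bar>\<omega>Y (snd (fst u), snd (snd u)) - gY (snd (fst u), snd (snd u))\<bar>)"
    unfolding distortion_def using p by (intro mult_left_mono) auto
  finally show ?thesis .
qed

lemma abs_integral_diff_le_integral:
  fixes f g h :: "'a \<Rightarrow> real"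
  assumes "integrable M f" "integrable M g" "integrable M h" "\<And>x. \<bar>f x - g x\<bar> \<le> h x"
  shows "\<bar>(\<integral>x. f x \<partial>M) - (\<integral>x. g x \<partial>M)\<bar> \<le> (\<integral>x. h x \<partial>M)"
proof -
  have "\<bar>(\<integral>x. f x \<partial>M) - (\<integral>x. g x \<partial>M)\<bar> = \<bar>\<integral>x. f x - g x \<partial>M\<bar>"
    using assms(1,2) by simp
  also have "\<dots> \<le> (\<integral>x. \<bar>f x - g x\<bar> \<partial>M)"
    by (rule integral_abs_bound)
  also have "\<dots> \<le> (\<integral>x. h x \<partial>M)"
    using assms by (intro integral_mono) auto
  finally show ?thesis .
qed

lemma abs_integral_distortion_powr_diff_le:
  fixes \<mu>X :: "'a::polish_space measure" and \<mu>Y :: "'b::polish_space measure"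
    and \<omega>X gX :: "'a \<times> 'a \<Rightarrow> real" and \<omega>Y gY :: "'b \<times> 'b \<Rightarrow> real"
  assumes \<nu>: "\<nu> \<in> couplings \<mu>X \<mu>Y" and sets: "sets \<mu>X = sets borel" "sets \<mu>Y = sets borel"
    and p: "p \<ge> 1"
    and \<omega>X: "\<omega>X \<in> borel_measurable borel" "\<And>x. \<bar>\<omega>X x\<bar> \<le> BX"
    and \<omega>Y: "\<omega>Y \<in> borel_measurable borel" "\<And>y. \<bar>\<omega>Y y\<bar> \<le> BY"
    and gX: "gX \<in> borel_measurable borel" "\<And>x. \<bar>gX x\<bar> \<le> BX"
    and gY: "gY \<in> borel_measurable borel" "\<And>y. \<bar>gY y\<bar> \<le> BY"
  shows "\<bar>(\<integral>u. distortion \<omega>X \<omega>Y u powr p \<partial>(\<nu> \<Otimes>\<^sub>M \<nu>)) - (\<integral>u. distortion gX gY u powr p \<partial>(\<nu> \<Otimes>\<^sub>M \<nu>))\<bar>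
    \<le> p * (BX + BY) powr (p - 1) *
      ((\<integral>x. \<bar>\<omega>X x - gX x\<bar> \<partial>(\<mu>X \<Otimes>\<^sub>M \<mu>X)) + (\<integral>y. \<bar>\<omega>Y y - gY y\<bar> \<partial>(\<mu>Y \<Otimes>\<^sub>M \<mu>Y)))"
proof -
  define eX where "eX u = \<bar>\<omega>X (fst (fst u), fst (snd u)) - gX (fst (fst u), fst (snd u))\<bar>"
    for u :: "('a \<times> 'b) \<times> ('a \<times> 'b)"
  define eY where "eY u = \<bar>\<omega>Y (snd (fst u), snd (snd u)) - gY (snd (fst u), snd (snd u))\<bar>"
    for u :: "('a \<times> 'b) \<times> ('a \<times> 'b)"
  have N: "prob_space \<nu>" "sets \<nu> = sets borel" using coupling_prob_space[OF \<nu>] .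
  have meas: "(\<lambda>u. distortion \<omega>X \<omega>Y u powr p) \<in> borel_measurable borel"
    "(\<lambda>u. distortion gX gY u powr p) \<in> borel_measurable borel"
    "eX \<in> borel_measurable borel" "eY \<in> borel_measurable borel"
    using borel_measurable_distortion[OF \<omega>X(1) \<omega>Y(1)] borel_measurable_distortion[OF gX(1) gY(1)]
      borel_measurable_coordinate_pairs[OF \<omega>X(1) \<omega>Y(1)] borel_measurable_coordinate_pairs[OF gX(1) gY(1)]
    unfolding eX_def eY_def by measurable
  have bounds: "\<bar>distortion \<omega>X \<omega>Y u powr p\<bar> \<le> (BX + BY) powr p" "\<bar>distortion gX gY u powr p\<bar> \<le> (BX + BY) powr p"
    "\<bar>eX u\<bar> \<le> 2 * BX" "\<bar>eY u\<bar> \<le> 2 * BY" for u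
    using distortion_le[of \<omega>X BX \<omega>Y BY u, OF \<omega>X(2) \<omega>Y(2)] distortion_le[of gX BX gY BY u, OF gX(2) gY(2)]
      \<omega>X(2)[of "(fst (fst u), fst (snd u))"] gX(2)[of "(fst (fst u), fst (snd u))"]
      \<omega>Y(2)[of "(snd (fst u), snd (snd u))"] gY(2)[of "(snd (fst u), snd (snd u))"] p
    unfolding eX_def eY_def by (auto intro!: powr_mono2)
  note int = integrable_pair_measure_if_bounded[OF N N meas(1) bounds(1)]
    integrable_pair_measure_if_bounded[OF N N meas(2) bounds(2)]
    integrable_pair_measure_if_bounded[OF N N meas(3) bounds(3)]
    integrable_pair_measure_if_bounded[OF N N meas(4) bounds(4)]
  have "\<bar>(\<integral>u. distortion \<omega>X \<omega>Y u powr p \<partial>(\<nu> \<Otimes>\<^sub>M \<nu>)) - (\<integral>u. distortion gX gY u powr p \<partial>(\<nu> \<Otimes>\<^sub>M \<nu>))\<bar>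
      \<le> (\<integral>u. p * (BX + BY) powr (p - 1) * (eX u + eY u) \<partial>(\<nu> \<Otimes>\<^sub>M \<nu>))"
  proof (rule abs_integral_diff_le_integral[OF int(1,2)])
    show "integrable (\<nu> \<Otimes>\<^sub>M \<nu>) (\<lambda>u. p * (BX + BY) powr (p - 1) * (eX u + eY u))"
      using int(3,4) by simp
    show "\<bar>distortion \<omega>X \<omega>Y u powr p - distortion gX gY u powr p\<bar> \<le> p * (BX + BY) powr (p - 1) * (eX u + eY u)"
      for u
      unfolding eX_def eY_def by (rule abs_distortion_powr_diff_le[OF p \<omega>X(2) \<omega>Y(2) gX(2) gY(2)])
  qed
  also have "\<dots> = p * (BX + BY) powr (p - 1) * ((\<integral>u. eX u \<partial>(\<nu> \<Otimes>\<^sub>M \<nu>)) + (\<integral>u. eY u \<partial>(\<nu> \<Otimes>\<^sub>M \<nu>)))"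
    using int by simp
  \<comment> \<open>each error term sees only one marginal of \<open>\<nu>\<close>\<close>
  also have "(\<integral>u. eX u \<partial>(\<nu> \<Otimes>\<^sub>M \<nu>)) = (\<integral>x. \<bar>\<omega>X x - gX x\<bar> \<partial>(\<mu>X \<Otimes>\<^sub>M \<mu>X))"
    unfolding eX_def using \<omega>X(1) gX(1) \<omega>Y(1)
    by (intro integral_coupling_coordinates(1)[OF \<nu> sets]) measurable
  also have "(\<integral>u. eY u \<partial>(\<nu> \<Otimes>\<^sub>M \<nu>)) = (\<integral>y. \<bar>\<omega>Y y - gY y\<bar> \<partial>(\<mu>Y \<Otimes>\<^sub>M \<mu>Y))"
    unfolding eY_def using \<omega>Y(1) gY(1) \<omega>X(1)
    by (intro integral_coupling_coordinates(2)[OF \<nu> sets]) measurable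
  finally show ?thesis .
qed

section \<open>Continuity of the p-distortion\<close>

lemma continuous_map_real_uniform_approx:
  assumes "\<And>\<epsilon>. \<epsilon> > 0 \<Longrightarrow> \<exists>g. continuous_map X euclideanreal g \<and> (\<forall>x\<in>topspace X. \<bar>g x - f x\<bar> < \<epsilon>)"
  shows "continuous_map X euclideanreal f"
proof -
  define g where "g \<epsilon> = (SOME g. continuous_map X euclideanreal g \<and> (\<forall>x\<in>topspace X. \<bar>g x - f x\<bar> < \<epsilon>))"
    for \<epsilon> :: real
  have g: "continuous_map X euclideanreal (g \<epsilon>)" "\<And>x. x \<in> topspace X \<Longrightarrow> \<bar>g \<epsilon> x - f x\<bar> < \<epsilon>"
    if "\<epsilon> > 0" for \<epsilon>
    using someI_ex[OF assms[OF that]] unfolding g_def by blast+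
  show ?thesis
    unfolding mtopology_is_euclidean[symmetric]
  proof (rule Met_TC.continuous_map_uniform_limit[where F="at_right 0" and f=g])
    show "\<forall>\<^sub>F \<epsilon> in at_right 0. continuous_map X Met_TC.mtopology (g \<epsilon>)"
      using eventually_at_right_less[of 0] by eventually_elim (simp add: g(1))
    show "\<forall>\<^sub>F \<epsilon> in at_right 0. \<forall>x\<in>topspace X. f x \<in> UNIV \<and> dist (g \<epsilon> x) (f x) < \<delta>"
      if "\<delta> > 0" for \<delta>
    proof -
      have "\<forall>\<^sub>F \<epsilon> in at_right 0. 0 < \<epsilon> \<and> \<epsilon> < \<delta>"
        unfolding eventually_at_right_field using that by blast
      then show ?thesis
      proof eventually_elim
        case (elim \<epsilon>)
        then show ?case
          using g(2)[of \<epsilon>] by (auto simp: dist_real_def intro: less_trans)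
      qed
    qed
  qed simp
qed

lemma integral_distortion_powr_uniform_approx:
  fixes \<omega>X :: "'a::polish_space \<times> 'a \<Rightarrow> real" and \<omega>Y :: "'b::polish_space \<times> 'b \<Rightarrow> real"
  assumes X: "measure_network \<omega>X \<mu>X" and Y: "measure_network \<omega>Y \<mu>Y" and p: "1 \<le> p"
    and BX: "\<And>x. \<bar>\<omega>X x\<bar> \<le> BX" and BY: "\<And>y. \<bar>\<omega>Y y\<bar> \<le> BY" and "\<epsilon> > 0"
  obtains gX gY where "continuous_on UNIV gX" "\<And>x. \<bar>gX x\<bar> \<le> BX" "continuous_on UNIV gY" "\<And>y. \<bar>gY y\<bar> \<le> BY"
    "\<And>\<nu>. \<nu> \<in> couplings \<mu>X \<mu>Y \<Longrightarrow>
      \<bar>(\<integral>u. distortion \<omega>X \<omega>Y u powr p \<partial>(\<nu> \<Otimes>\<^sub>M \<nu>)) - (\<integral>u. distortion gX gY u powr p \<partial>(\<nu> \<Otimes>\<^sub>M \<nu>))\<bar> < \<epsilon>"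
proof -
  define L where "L = p * (BX + BY) powr (p - 1)"
  have "L \<ge> 0" using p by (simp add: L_def)
  define \<eta> where "\<eta> = \<epsilon> / (L + 1) / 2"
  have "\<eta> > 0" using \<open>\<epsilon> > 0\<close> \<open>L \<ge> 0\<close> by (simp add: \<eta>_def)
  have "\<eta> + \<eta> = \<epsilon> / (L + 1)"
    unfolding \<eta>_def by (rule field_sum_of_halves)
  then have "L * (\<eta> + \<eta>) = \<epsilon> * (L / (L + 1))"
    by (simp add: mult.commute)
  also have "\<dots> < \<epsilon> * 1"
    using \<open>\<epsilon> > 0\<close> \<open>L \<ge> 0\<close> by (intro mult_strict_left_mono) auto
  finally have small: "L * (\<eta> + \<eta>) < \<epsilon>" by simp
  obtain gX where gX: "continuous_on UNIV gX" "\<And>x. \<bar>gX x\<bar> \<le> BX"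
    "(\<integral>x. \<bar>\<omega>X x - gX x\<bar> \<partial>(\<mu>X \<Otimes>\<^sub>M \<mu>X)) < \<eta>"
    using bounded_continuous_L1_approx[OF measure_network_pair_measure[OF X] BX \<open>\<eta> > 0\<close>] by blast
  obtain gY where gY: "continuous_on UNIV gY" "\<And>y. \<bar>gY y\<bar> \<le> BY"
    "(\<integral>y. \<bar>\<omega>Y y - gY y\<bar> \<partial>(\<mu>Y \<Otimes>\<^sub>M \<mu>Y)) < \<eta>"
    using bounded_continuous_L1_approx[OF measure_network_pair_measure[OF Y] BY \<open>\<eta> > 0\<close>] by blast
  show ?thesis
  proof (rule that[OF gX(1,2) gY(1,2)])
    fix \<nu> assume \<nu>: "\<nu> \<in> couplings \<mu>X \<mu>Y"
    have "\<bar>(\<integral>u. distortion \<omega>X \<omega>Y u powr p \<partial>(\<nu> \<Otimes>\<^sub>M \<nu>)) - (\<integral>u. distortion gX gY u powr p \<partial>(\<nu> \<Otimes>\<^sub>M \<nu>))\<bar>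
        \<le> L * ((\<integral>x. \<bar>\<omega>X x - gX x\<bar> \<partial>(\<mu>X \<Otimes>\<^sub>M \<mu>X)) + (\<integral>y. \<bar>\<omega>Y y - gY y\<bar> \<partial>(\<mu>Y \<Otimes>\<^sub>M \<mu>Y)))"
      unfolding L_def
      using measure_networkD(2,4)[OF X] measure_networkD(2,4)[OF Y] BX BY gX(2) gY(2)
        borel_measurable_continuous_onI[OF gX(1)] borel_measurable_continuous_onI[OF gY(1)]
      by (intro abs_integral_distortion_powr_diff_le[OF \<nu> _ _ p])
    also have "\<dots> \<le> L * (\<eta> + \<eta>)"
      using gX(3) gY(3) \<open>L \<ge> 0\<close> by (intro mult_left_mono) auto
    finally show "\<bar>(\<integral>u. distortion \<omega>X \<omega>Y u powr p \<partial>(\<nu> \<Otimes>\<^sub>M \<nu>)) - (\<integral>u. distortion gX gY u powr p \<partial>(\<nu> \<Otimes>\<^sub>M \<nu>))\<bar> < \<epsilon>"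
      using small by linarith
  qed
qed

lemma continuous_map_integral_distortion_powr:
  fixes \<omega>X :: "'a::polish_space \<times> 'a \<Rightarrow> real" and \<omega>Y :: "'b::polish_space \<times> 'b \<Rightarrow> real"
  assumes X: "measure_network \<omega>X \<mu>X" and Y: "measure_network \<omega>Y \<mu>Y" and p: "1 \<le> p"
  shows "continuous_map (subtopology narrow_topology (couplings \<mu>X \<mu>Y)) euclideanreal
    (\<lambda>\<nu>. \<integral>u. distortion \<omega>X \<omega>Y u powr p \<partial>(\<nu> \<Otimes>\<^sub>M \<nu>))"
proof (rule continuous_map_real_uniform_approx)
  fix \<epsilon> :: real assume "\<epsilon> > 0"
  obtain BX BY where BX: "\<And>x. \<bar>\<omega>X x\<bar> \<le> BX" and BY: "\<And>y. \<bar>\<omega>Y y\<bar> \<le> BY"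
    using measure_networkD(3)[OF X] measure_networkD(3)[OF Y] by blast
  show "\<exists>g. continuous_map (subtopology narrow_topology (couplings \<mu>X \<mu>Y)) euclideanreal g \<and>
      (\<forall>\<nu>\<in>topspace (subtopology narrow_topology (couplings \<mu>X \<mu>Y)).
        \<bar>g \<nu> - (\<integral>u. distortion \<omega>X \<omega>Y u powr p \<partial>(\<nu> \<Otimes>\<^sub>M \<nu>))\<bar> < \<epsilon>)"
  proof (rule integral_distortion_powr_uniform_approx[OF X Y p BX BY \<open>\<epsilon> > 0\<close>])
    fix gX gY
    assume gX: "continuous_on UNIV gX" "\<And>x. \<bar>gX x\<bar> \<le> BX"
      and gY: "continuous_on UNIV gY" "\<And>y. \<bar>gY y\<bar> \<le> BY"
      and close: "\<And>\<nu>. \<nu> \<in> couplings \<mu>X \<mu>Y \<Longrightarrow>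
        \<bar>(\<integral>u. distortion \<omega>X \<omega>Y u powr p \<partial>(\<nu> \<Otimes>\<^sub>M \<nu>)) - (\<integral>u. distortion gX gY u powr p \<partial>(\<nu> \<Otimes>\<^sub>M \<nu>))\<bar> < \<epsilon>"
    have "continuous_map (subtopology narrow_topology (couplings \<mu>X \<mu>Y)) euclideanreal
        (\<lambda>\<nu>. \<integral>u. distortion gX gY u powr p \<partial>(\<nu> \<Otimes>\<^sub>M \<nu>))"
    proof (rule continuous_map_integral_pair_measure)
      show "prob_space \<nu> \<and> sets \<nu> = sets borel" if "\<nu> \<in> couplings \<mu>X \<mu>Y" for \<nu>
        using coupling_prob_space[OF that] by simp
      show "uniformly_tight (couplings \<mu>X \<mu>Y)"
        by (rule uniformly_tight_couplings[OF measure_networkD(1,2)[OF X] measure_networkD(1,2)[OF Y]])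
      show "continuous_on UNIV (\<lambda>u. distortion gX gY u powr p)"
        using continuous_on_distortion[OF gX(1) gY(1)] p
        by (intro continuous_on_powr') (auto simp: distortion_def intro: continuous_intros)
      show "\<bar>distortion gX gY u powr p\<bar> \<le> (BX + BY) powr p" for u
        using distortion_le[of gX BX gY BY u, OF gX(2) gY(2)] p by (simp add: powr_mono2)
    qed
    moreover have "\<bar>(\<integral>u. distortion gX gY u powr p \<partial>(\<nu> \<Otimes>\<^sub>M \<nu>)) - (\<integral>u. distortion \<omega>X \<omega>Y u powr p \<partial>(\<nu> \<Otimes>\<^sub>M \<nu>))\<bar> < \<epsilon>"
      if "\<nu> \<in> topspace (subtopology narrow_topology (couplings \<mu>X \<mu>Y))" for \<nu>
      using close[of \<nu>] that by (simp add: topspace_narrow_topology abs_minus_commute)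
    ultimately show ?thesis
      by blast
  qed
qed

lemma continuous_map_dis_p:
  fixes \<omega>X :: "'a::polish_space \<times> 'a \<Rightarrow> real" and \<omega>Y :: "'b::polish_space \<times> 'b \<Rightarrow> real"
  assumes X: "measure_network \<omega>X \<mu>X" and Y: "measure_network \<omega>Y \<mu>Y" and p: "1 \<le> p"
  shows "continuous_map (subtopology narrow_topology (couplings \<mu>X \<mu>Y)) euclideanreal (dis_p p \<omega>X \<omega>Y)"
proof -
  have "continuous_map (subtopology narrow_topology (couplings \<mu>X \<mu>Y)) (top_of_set {0..})
      (\<lambda>\<nu>. \<integral>u. distortion \<omega>X \<omega>Y u powr p \<partial>(\<nu> \<Otimes>\<^sub>M \<nu>))"
    using continuous_map_integral_distortion_powr[OF X Y p] by (auto simp: continuous_map_in_subtopology)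
  moreover have "continuous_map (top_of_set {0..}) euclideanreal (\<lambda>t::real. t powr (1 / p))"
    using p by (simp, intro continuous_on_powr' continuous_intros) auto
  ultimately have "continuous_map (subtopology narrow_topology (couplings \<mu>X \<mu>Y)) euclideanreal
      ((\<lambda>t. t powr (1 / p)) \<circ> (\<lambda>\<nu>. \<integral>u. distortion \<omega>X \<omega>Y u powr p \<partial>(\<nu> \<Otimes>\<^sub>M \<nu>)))"
    by (rule continuous_map_compose)
  then show ?thesis
    by (simp add: comp_def dis_p_eq_integral_distortion[abs_def])
qed

section \<open>Lower semicontinuity of the sup-distortion\<close>

lemma lower_semicontinuous_map_SUP_continuous:
  assumes g: "\<And>i. i \<in> I \<Longrightarrow> continuous_map X euclideanreal (g i)"
    and f: "\<And>x. x \<in> topspace X \<Longrightarrow> f x = (SUP i\<in>I. ereal (g i x))"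
  shows "lower_semicontinuous_map X f"
  unfolding lower_semicontinuous_map_def
proof
  fix t :: ereal
  have "openin X {x \<in> topspace X. t < ereal (g i x)}" if "i \<in> I" for i
  proof -
    have "continuous_map X euclidean (ereal \<circ> g i)"
      using g[OF that] continuous_on_ereal[OF continuous_on_id[of UNIV]]
      by (intro continuous_map_compose) auto
    then show ?thesis
      unfolding continuous_map_upper_lower_semicontinuous_lt by simp
  qed
  then have "openin X (\<Union>i\<in>I. {x \<in> topspace X. t < ereal (g i x)})"
    by blast
  also have "(\<Union>i\<in>I. {x \<in> topspace X. t < ereal (g i x)}) = {x \<in> topspace X. t < f x}"
    using f by (auto simp: less_SUP_iff)
  finally show "openin X {x \<in> topspace X. t < f x}" .
qed

lemma integrable_powr_if_bounded:
  fixes f :: "'a \<Rightarrow> real"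
  assumes "finite_measure M" "f \<in> borel_measurable M" "\<And>x. 0 \<le> f x" "\<And>x. f x \<le> B" "p \<ge> 0"
  shows "integrable M (\<lambda>x. f x powr p)"
proof (rule integrable_if_bounded[OF assms(1)])
  show "(\<lambda>x. f x powr p) \<in> borel_measurable M"
    using assms(2) by measurable
  show "\<bar>f x powr p\<bar> \<le> B powr p" for x
    using assms(3)[of x] assms(4)[of x] assms(5) by (simp add: powr_mono2)
qed

lemma measure_powr_le_integral_powr:
  fixes f :: "'a \<Rightarrow> real"
  assumes M: "prob_space M" and f: "f \<in> borel_measurable M" "\<And>x. 0 \<le> f x" "\<And>x. f x \<le> B"
    and p: "p > 0" and r: "r \<ge> 0"
  shows "r * measure M {x \<in> space M. r < f x} powr (1 / p) \<le> (\<integral>x. f x powr p \<partial>M) powr (1 / p)"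
proof -
  interpret prob_space M by fact
  define A where "A = {x \<in> space M. r < f x}"
  have A: "A \<in> sets M" unfolding A_def using f(1) by measurable
  have "r powr p * measure M A = (\<integral>x. r powr p * indicator A x \<partial>M)"
    using A by simp
  also have "\<dots> \<le> (\<integral>x. f x powr p \<partial>M)"
  proof (rule integral_mono)
    show "integrable M (\<lambda>x. f x powr p)"
      using integrable_powr_if_bounded[OF finite_measure f, of p] p by simp
    show "r powr p * indicator A x \<le> f x powr p" for x
      using r p f(2)[of x] by (auto simp: A_def indicator_def intro: powr_mono2)
  qed (use A in \<open>simp add: less_top[symmetric]\<close>)
  finally have "(r powr p * measure M A) powr (1 / p) \<le> (\<integral>x. f x powr p \<partial>M) powr (1 / p)"
    using p by (intro powr_mono2) auto
  moreover have "(r powr p * measure M A) powr (1 / p) = r * measure M A powr (1 / p)"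
    using p r by (simp add: powr_mult powr_powr powr_one)
  ultimately show ?thesis by (simp add: A_def)
qed

lemma powr_integral_powr_le_esssup:
  fixes f :: "'a \<Rightarrow> real"
  assumes M: "prob_space M" and f: "f \<in> borel_measurable M" "\<And>x. 0 \<le> f x" "\<And>x. f x \<le> B"
    and p: "p \<ge> 1"
  shows "ereal ((\<integral>x. f x powr p \<partial>M) powr (1 / p)) \<le> esssup M (\<lambda>x. ereal (f x))"
proof -
  interpret prob_space M by fact
  have f_ereal: "(\<lambda>x. ereal (f x)) \<in> borel_measurable M"
    using f(1) by measurable
  have "0 = esssup M (\<lambda>x. ereal 0)"
    unfolding zero_ereal_def by (rule esssup_const[symmetric]) (simp add: emeasure_space_1)
  also have "\<dots> \<le> esssup M (\<lambda>x. ereal (f x))"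
    using f(2) by (intro esssup_mono) (auto simp: zero_ereal_def)
  finally have "0 \<le> esssup M (\<lambda>x. ereal (f x))" .
  moreover have "esssup M (\<lambda>x. ereal (f x)) \<le> ereal B"
    using f(3) by (intro esssup_I f_ereal) auto
  ultimately obtain s where s: "esssup M (\<lambda>x. ereal (f x)) = ereal s" "0 \<le> s"
    by (cases "esssup M (\<lambda>x. ereal (f x))") auto
  have "AE x in M. f x \<le> s"
    using esssup_AE[of "\<lambda>x. ereal (f x)" M] s(1) by simp
  then have "AE x in M. f x powr p \<le> s powr p"
    by eventually_elim (use f(2) p in \<open>auto intro: powr_mono2\<close>)
  then have "(\<integral>x. f x powr p \<partial>M) \<le> (\<integral>x. s powr p \<partial>M)"
    using integrable_powr_if_bounded[OF finite_measure f, of p] p by (intro integral_mono_AE) auto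
  then have "(\<integral>x. f x powr p \<partial>M) powr (1 / p) \<le> (s powr p) powr (1 / p)"
    using p by (intro powr_mono2) (auto simp: prob_space)
  also have "\<dots> = s"
    using p s(2) by (simp add: powr_powr powr_one)
  finally show ?thesis
    using s(1) by simp
qed

lemma powr_integral_powr_gt_below_esssup:
  fixes f :: "'a \<Rightarrow> real"
  assumes M: "prob_space M" and f: "f \<in> borel_measurable M" "\<And>x. 0 \<le> f x" "\<And>x. f x \<le> B"
    and r: "ereal r < esssup M (\<lambda>x. ereal (f x))" and "t < r"
  obtains p where "p \<ge> 1" "t < (\<integral>x. f x powr p \<partial>M) powr (1 / p)"
proof (cases "r > 0")
  case False
  have "t < (\<integral>x. f x powr 1 \<partial>M) powr (1 / 1)"
    using False \<open>t < r\<close> powr_ge_zero[of "\<integral>x. f x powr 1 \<partial>M" "1 / 1"] by linarith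
  then show ?thesis
    by (rule that[rotated]) simp
next
  case True
  interpret prob_space M by fact
  define \<delta> where "\<delta> = measure M {x \<in> space M. r < f x}"
  have "emeasure M {x \<in> space M. ereal r < ereal (f x)} > 0"
    using f(1) r by (intro esssup_pos_measure) measurable
  then have "\<delta> > 0"
    by (simp add: \<delta>_def emeasure_eq_measure)
  have "((\<lambda>p. r * \<delta> powr (1 / p)) \<longlongrightarrow> r * \<delta> powr 0) at_top"
    using \<open>\<delta> > 0\<close> by (intro tendsto_intros real_tendsto_divide_at_top[OF tendsto_const filterlim_ident]) auto
  then have "\<forall>\<^sub>F p in at_top. t < r * \<delta> powr (1 / p) \<and> 1 \<le> p"
    using \<open>t < r\<close> \<open>\<delta> > 0\<close> by (intro eventually_conj order_tendstoD(1) eventually_ge_at_top) auto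
  then obtain p where p: "t < r * \<delta> powr (1 / p)" "1 \<le> p"
    unfolding eventually_at_top_linorder by (meson order_refl)
  moreover have "r * \<delta> powr (1 / p) \<le> (\<integral>x. f x powr p \<partial>M) powr (1 / p)"
    unfolding \<delta>_def using measure_powr_le_integral_powr[OF M f, of p r] p(2) True by simp
  ultimately show ?thesis
    by (intro that[of p]) auto
qed

lemma esssup_eq_SUP_powr_integral:
  fixes f :: "'a \<Rightarrow> real"
  assumes M: "prob_space M" and f: "f \<in> borel_measurable M" "\<And>x. 0 \<le> f x" "\<And>x. f x \<le> B"
  shows "esssup M (\<lambda>x. ereal (f x)) = (SUP p\<in>{1..}. ereal ((\<integral>x. f x powr p \<partial>M) powr (1 / p)))"
proof (rule antisym)
  show "esssup M (\<lambda>x. ereal (f x)) \<le> (SUP p\<in>{1..}. ereal ((\<integral>x. f x powr p \<partial>M) powr (1 / p)))"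
  proof (rule dense_le)
    fix t assume "t < esssup M (\<lambda>x. ereal (f x))"
    then obtain r where r: "t < ereal r" "ereal r < esssup M (\<lambda>x. ereal (f x))"
      using ereal_dense2 by blast
    then obtain t' where t': "t < ereal t'" "t' < r"
      using ereal_dense2[OF r(1)] by auto
    obtain p where "p \<ge> 1" "t' < (\<integral>x. f x powr p \<partial>M) powr (1 / p)"
      using powr_integral_powr_gt_below_esssup[OF M f r(2) t'(2)] .
    then have "t \<le> ereal ((\<integral>x. f x powr p \<partial>M) powr (1 / p))"
      using t'(1) by (simp add: order_less_le_trans less_imp_le)
    also have "\<dots> \<le> (SUP p\<in>{1..}. ereal ((\<integral>x. f x powr p \<partial>M) powr (1 / p)))"
      using \<open>p \<ge> 1\<close> by (intro SUP_upper) auto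
    finally show "t \<le> (SUP p\<in>{1..}. ereal ((\<integral>x. f x powr p \<partial>M) powr (1 / p)))" .
  qed
  show "(SUP p\<in>{1..}. ereal ((\<integral>x. f x powr p \<partial>M) powr (1 / p))) \<le> esssup M (\<lambda>x. ereal (f x))"
    using powr_integral_powr_le_esssup[OF M f] by (intro SUP_least) auto
qed

lemma lower_semicontinuous_map_dis_inf:
  fixes \<omega>X :: "'a::polish_space \<times> 'a \<Rightarrow> real" and \<omega>Y :: "'b::polish_space \<times> 'b \<Rightarrow> real"
  assumes X: "measure_network \<omega>X \<mu>X" and Y: "measure_network \<omega>Y \<mu>Y"
  shows "lower_semicontinuous_map (subtopology narrow_topology (couplings \<mu>X \<mu>Y)) (dis_inf \<omega>X \<omega>Y)"
proof (rule lower_semicontinuous_map_SUP_continuous[where I="{1..}" and g="\<lambda>p. dis_p p \<omega>X \<omega>Y"])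
  show "continuous_map (subtopology narrow_topology (couplings \<mu>X \<mu>Y)) euclideanreal (dis_p p \<omega>X \<omega>Y)"
    if "p \<in> {1..}" for p
    using continuous_map_dis_p[OF X Y] that by simp
  fix \<nu> assume "\<nu> \<in> topspace (subtopology narrow_topology (couplings \<mu>X \<mu>Y))"
  then have "\<nu> \<in> couplings \<mu>X \<mu>Y"
    by (simp add: topspace_narrow_topology)
  note \<nu> = coupling_prob_space[OF this]
  obtain BX BY where "\<And>x. \<bar>\<omega>X x\<bar> \<le> BX" "\<And>y. \<bar>\<omega>Y y\<bar> \<le> BY"
    using measure_networkD(3)[OF X] measure_networkD(3)[OF Y] by blast
  then have bounded: "distortion \<omega>X \<omega>Y u \<le> BX + BY" for u
    by (rule distortion_le)
  have "distortion \<omega>X \<omega>Y \<in> borel_measurable (\<nu> \<Otimes>\<^sub>M \<nu>)"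
    by (subst measurable_cong_sets[OF sets_pair_measure_borel[OF \<nu>(2,2)] refl])
      (rule borel_measurable_distortion[OF measure_networkD(4)[OF X] measure_networkD(4)[OF Y]])
  from esssup_eq_SUP_powr_integral[OF prob_space_pair[OF \<nu>(1,1)] this distortion_nonneg bounded]
  show "dis_inf \<omega>X \<omega>Y \<nu> = (SUP p\<in>{1..}. ereal (dis_p p \<omega>X \<omega>Y \<nu>))"
    by (simp add: dis_inf_eq_esssup_distortion dis_p_eq_integral_distortion)
qed

theorem mainTheorem1:
  fixes \<omega>X :: "'a::polish_space \<times> 'a \<Rightarrow> real" and \<mu>X :: "'a measure"
    and \<omega>Y :: "'b::polish_space \<times> 'b \<Rightarrow> real" and \<mu>Y :: "'b measure"
  assumes "measure_network \<omega>X \<mu>X" and "measure_network \<omega>Y \<mu>Y"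
  shows "(\<forall>p::real. 1 \<le> p \<longrightarrow>
           continuous_map (subtopology narrow_topology (couplings \<mu>X \<mu>Y)) euclideanreal
             (dis_p p \<omega>X \<omega>Y))
         \<and> lower_semicontinuous_map (subtopology narrow_topology (couplings \<mu>X \<mu>Y)) (dis_inf \<omega>X \<omega>Y)"
  using continuous_map_dis_p[OF assms] lower_semicontinuous_map_dis_inf[OF assms] by blast

end
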